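(* Fix an integer $n\ge 2$ and let $p(x)=\sum_{k\ge0}p_kx^k$, where $p_k$ is the probability that a uniformly random permutation in $S_k$ has an $n$-th root. Define $$q_1(x)=\exp\Big(\sum_{r\ge1,\ \gcd(r,n)=1}\frac{x^r}{r}\Big),\qquad q_2(x)=\exp\Big(\sum_{r\ge1,\ \gcd(r,n)>1}\frac{x^{r\,d_n(r)}}{r^2}\Big).$$ Then (i) $p(x)\preceq q_1(x)q_2(x)$ coefficientwise; (ii) the coefficients of $q_2$ are $O(m^{-2})$ as $m\to\infty$; and (iii) $q_1(x)=\prod_{d\mid n}(1-x^d)^{-\mu(d)/d}$ as formal power series, where $\mu$ is the Möbius function.
   Context: For power series $f,g$ with real coefficients, $f\preceq g$ means every coefficient of $f$ is at most the corresponding coefficient of $g$. For positive integers $n,r$, $d_n(r)$ denotes the smallest positive divisor $d$ of $n$ such that $\gcd(r,n/d)=1$; equivalently $d_n(r)=\prod_{p\mid r,\,p\text{ prime}}p^{v_p(n)}$. *)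

theory Defs
  imports Complex_Main "HOL-Combinatorics.Permutations"
    "HOL-Computational_Algebra.Formal_Power_Series" "HOL-Computational_Algebra.Squarefree"
    "HOL-Library.Landau_Symbols"
begin

definition fps_le :: "real fps \<Rightarrow> real fps \<Rightarrow> bool" (infix \<open>\<preceq>\<^sub>f\<close> 50) where
  "f \<preceq>\<^sub>f g \<longleftrightarrow> (\<forall>k. fps_nth f k \<le> fps_nth g k)"

definition dn :: "nat \<Rightarrow> nat \<Rightarrow> nat" where
  "dn n r = (LEAST d. 0 < d \<and> d dvd n \<and> coprime r (n div d))"

definition moebius_mu :: "nat \<Rightarrow> int" where
  "moebius_mu m = (if m = 0 then 0 else if squarefree m then (-1) ^ card (prime_factors m) else 0)"

definition perms_with_root :: "nat \<Rightarrow> nat \<Rightarrow> (nat \<Rightarrow> nat) set" where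
  "perms_with_root n k = {\<pi>. \<pi> permutes {..<k} \<and> (\<exists>\<sigma>. \<sigma> permutes {..<k} \<and> \<sigma> ^^ n = \<pi>)}"

definition p_series :: "nat \<Rightarrow> real fps" where
  "p_series n = Abs_fps (\<lambda>k. real (card (perms_with_root n k)) / fact k)"

(* exp of a power series with zero constant term *)
definition fps_exp_of :: "real fps \<Rightarrow> real fps" where
  "fps_exp_of f = fps_exp 1 oo f"

definition q1 :: "nat \<Rightarrow> real fps" where
  "q1 n = fps_exp_of (Abs_fps (\<lambda>r. if r \<ge> 1 \<and> coprime r n then 1 / real r else 0))"

(* sum_{r>=1, gcd(r,n)>1} x^(r d_n(r)) / r^2, coefficient of x^m collected *)
definition q2 :: "nat \<Rightarrow> real fps" where
  "q2 n = fps_exp_of (Abs_fps (\<lambda>m. \<Sum>r\<in>{r. 1 \<le> r \<and> r \<le> m \<and> gcd r n > 1 \<and> r * dn n r = m}. 1 / (real r)^2))"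

definition fps_one_minus_Xpow_powr :: "nat \<Rightarrow> real \<Rightarrow> real fps" where
  "fps_one_minus_Xpow_powr d a = fps_binomial a oo (- (fps_X ^ d))"

end

theory Submission
  imports Defs "HOL-Combinatorics.Orbits" "HOL-Combinatorics.Cycles"
    "HOL-Combinatorics.Multiset_Permutations"
begin

text \<open>An \<open>L\<close>-cycle of \<open>s\<close> splits in \<open>s ^^ n\<close> into \<open>gcd L n\<close> cycles of length
  \<open>r = L div gcd L n\<close>, and \<open>dn n r\<close> divides \<open>gcd L n\<close>. So in an \<open>n\<close>-th power the number of
  \<open>r\<close>-cycles is a multiple of \<open>dn n r\<close> for every \<open>r\<close>. A permutation with this property splits,
  around any given point, into a block formed by \<open>dn n r\<close> cycles of length \<open>r\<close> and a
  permutation of the remaining points with the same property. On \<open>m\<close> points there are at most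
  \<open>m!/m\<close> blocks with \<open>r = m\<close> coprime to \<open>n\<close> and at most \<open>m!/r^2\<close> blocks for each other \<open>r\<close>;
  these bounds are the coefficients of \<open>log q1 + log q2\<close>, and the exponential formula turns
  them into the bound by \<open>q1 * q2\<close>.

  The coefficients of \<open>log q2\<close> are \<open>O(1/m^2)\<close>, and the recurrence
  \<open>m c(m) = (\<Sum>j. j b(j) c(m - j))\<close> for the coefficients of \<open>exp b\<close> passes this decay on to
  \<open>q2\<close>. Finally, \<open>q1\<close> and the product over \<open>d dvd n\<close> both have constant term 1 and the
  logarithmic derivative \<open>\<Sum>d dvd n. mu(d) X^(d-1) / (1 - X^d)\<close>, whose coefficient of
  \<open>X^(r-1)\<close> is, by Moebius inversion, 1 if \<open>coprime r n\<close> and 0 otherwise.\<close>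

unbundle fps_syntax

section \<open>Orbits of permutations of finite sets\<close>

lemma permutes_self_in_orbit: "f permutes S \<Longrightarrow> finite S \<Longrightarrow> x \<in> orbit f x"
  by (meson permutation_permutes permutation_self_in_orbit)

lemma permutes_orbit_eq: "f permutes S \<Longrightarrow> finite S \<Longrightarrow> y \<in> orbit f x \<Longrightarrow> orbit f y = orbit f x"
  by (metis cyclic_on_orbit orbit_cyclic_eq3)

lemma permutes_orbits_disjoint:
  assumes "f permutes S" "finite S" "orbit f x \<noteq> orbit f y"
  shows "orbit f x \<inter> orbit f y = {}"
  using permutes_orbit_eq[OF assms(1,2)] assms(3) by blast

lemma permutes_finite_orbit: "f permutes S \<Longrightarrow> finite S \<Longrightarrow> finite (orbit f x)"
  by (meson finite_orbit permutes_self_in_orbit)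

lemma permutes_card_orbit_pos: "f permutes S \<Longrightarrow> finite S \<Longrightarrow> card (orbit f x) > 0"
  by (metis card_gt_0_iff empty_iff permutes_finite_orbit permutes_self_in_orbit)

lemma permutes_card_orbit_eq_funpow_dist1:
  assumes "f permutes S" "finite S"
  shows "card (orbit f x) = funpow_dist1 f x x"
proof -
  have x: "x \<in> orbit f x" by (rule permutes_self_in_orbit[OF assms])
  show ?thesis
    by (subst orbit_conv_funpow_dist1[OF x]) (simp add: card_image inj_on_funpow_dist1[OF x])
qed

lemma permutes_orbit_enumeration:
  assumes "f permutes S" "finite S"
  shows "orbit f x = (\<lambda>i. (f ^^ i) x) ` {0..<card (orbit f x)}"
    and "inj_on (\<lambda>i. (f ^^ i) x) {0..<card (orbit f x)}"
  unfolding permutes_card_orbit_eq_funpow_dist1[OF assms]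
  using permutes_self_in_orbit[OF assms]
  by (simp_all add: orbit_conv_funpow_dist1[symmetric] inj_on_funpow_dist1)

lemma permutes_funpow_eq_self_iff:
  assumes "f permutes S" "finite S"
  shows "(f ^^ m) x = x \<longleftrightarrow> card (orbit f x) dvd m"
proof -
  define L where "L = card (orbit f x)"
  have L: "L = funpow_dist1 f x x"
    unfolding L_def by (rule permutes_card_orbit_eq_funpow_dist1[OF assms])
  have xo: "x \<in> orbit f x" by (rule permutes_self_in_orbit[OF assms])
  have period: "(f ^^ L) x = x" unfolding L by (rule funpow_dist1_prop[OF xo])
  have "(f ^^ m) x = (f ^^ (m mod L)) x" using funpow_mod_eq[OF period] by simp
  moreover have "(f ^^ (m mod L)) x \<noteq> x" if "m mod L \<noteq> 0"
  proof (rule funpow_dist1_least)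
    show "m mod L < funpow_dist1 f x x" using L by simp
  qed (use that in simp)
  ultimately have "(f ^^ m) x = x \<longleftrightarrow> m mod L = 0" by auto
  then show ?thesis unfolding L_def by (simp add: dvd_eq_mod_eq_0)
qed

lemma dvd_mult_iff_div_gcd_dvd:
  fixes L n j :: nat
  assumes "L > 0"
  shows "L dvd n * j \<longleftrightarrow> L div gcd L n dvd j"
proof -
  define g where "g = gcd L n"
  have "g > 0" using assms g_def by simp
  have "L = g * (L div g)" "n = g * (n div g)" unfolding g_def by simp_all
  then have "L dvd n * j \<longleftrightarrow> g * (L div g) dvd g * (n div g * j)"
    by (metis mult.assoc)
  also have "\<dots> \<longleftrightarrow> L div g dvd n div g * j" using \<open>g > 0\<close> by simp
  also have "\<dots> \<longleftrightarrow> L div g dvd j"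
    using div_gcd_coprime[of L n] assms unfolding g_def by (simp add: coprime_dvd_mult_right_iff)
  finally show ?thesis unfolding g_def .
qed

lemma card_orbit_funpow:
  assumes "s permutes S" "finite S"
  shows "card (orbit (s ^^ n) x) = card (orbit s x) div gcd (card (orbit s x)) n"
proof -
  define L where "L = card (orbit s x)"
  have "L > 0" unfolding L_def by (rule permutes_card_orbit_pos[OF assms])
  have sn: "(s ^^ n) permutes S" by (rule permutes_funpow[OF assms(1)])
  have "card (orbit (s ^^ n) x) dvd j \<longleftrightarrow> L div gcd L n dvd j" for j
  proof -
    have "card (orbit (s ^^ n) x) dvd j \<longleftrightarrow> (s ^^ (n * j)) x = x"
      by (simp add: permutes_funpow_eq_self_iff[OF sn assms(2), symmetric] funpow_mult)
    also have "\<dots> \<longleftrightarrow> L dvd n * j"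
      unfolding L_def by (rule permutes_funpow_eq_self_iff[OF assms])
    also have "\<dots> \<longleftrightarrow> L div gcd L n dvd j"
      using \<open>L > 0\<close> by (rule dvd_mult_iff_div_gcd_dvd)
    finally show ?thesis .
  qed
  from this[of "card (orbit (s ^^ n) x)"] this[of "L div gcd L n"]
  show ?thesis unfolding L_def by (simp add: dvd_antisym)
qed

section \<open>Invariant subsets and cycle counts\<close>

locale invariant_subset =
  fixes f :: "'a \<Rightarrow> 'a" and S T :: "'a set"
  assumes permutes: "f permutes S" and finite: "finite S" and subset: "T \<subseteq> S"
    and closed: "\<And>x. x \<in> T \<Longrightarrow> f x \<in> T"
begin

lemma finite_invariant: "finite T"
  using finite subset by (rule rev_finite_subset)

lemma image_eq: "f ` T = T"
proof -
  have "inj_on f T" using permutes by (meson permutes_inj inj_on_subset subset_UNIV)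
  moreover have "f ` T \<subseteq> T" using closed by blast
  ultimately show ?thesis using finite_invariant by (simp add: endo_inj_surj)
qed

lemma restrict_permutes: "perm_restrict f T permutes T"
proof (rule bij_imp_permutes)
  have "inj_on f T" using permutes by (meson permutes_inj inj_on_subset subset_UNIV)
  then have "bij_betw f T T" using image_eq by (simp add: bij_betw_def)
  then show "bij_betw (perm_restrict f T) T T"
    by (rule bij_betw_cong[THEN iffD1, rotated]) (simp add: perm_restrict_def)
qed (simp add: perm_restrict_def)

lemma orbit_restrict: "x \<in> T \<Longrightarrow> orbit (perm_restrict f T) x = orbit f x"
  by (rule orbit_cong0[of x T]) (auto simp: perm_restrict_def closed)

lemma orbit_subset: "x \<in> T \<Longrightarrow> orbit f x \<subseteq> T"
  using orbit_restrict permutes_orbit_subset[OF restrict_permutes] by blast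

lemma complement: "invariant_subset f S (S - T)"
proof
  fix x assume x: "x \<in> S - T"
  have "f x \<notin> T"
    using x image_eq permutes by (metis DiffD2 imageE permutes_inj injD)
  then show "f x \<in> S - T" using x permutes by (simp add: permutes_in_image)
qed (use permutes finite in auto)

lemma funpow_restrict: "(perm_restrict f T ^^ k) x = (if x \<in> T then (f ^^ k) x else x)"
proof (induction k)
  case (Suc k)
  have "x \<in> T \<Longrightarrow> (f ^^ k) x \<in> T" by (induction k) (auto simp: closed)
  with Suc show ?case by (simp add: perm_restrict_def)
qed simp

end

lemma invariant_subset_orbit:
  assumes "f permutes S" "finite S" "a \<in> S" and g: "\<And>x. x \<in> orbit f a \<Longrightarrow> g x \<in> orbit f a"
    and "g permutes S"
  shows "invariant_subset g S (orbit f a)"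
proof
  show "g permutes S" "finite S" by fact+
  show "orbit f a \<subseteq> S" using assms(1,3) by (rule permutes_orbit_subset)
qed (fact g)

lemma invariant_subset_Union_orbits:
  assumes "f permutes S" "finite S" "\<And>Q. Q \<in> QQ \<Longrightarrow> \<exists>x\<in>S. Q = orbit f x"
  shows "invariant_subset f S (\<Union>QQ)"
proof
  show "f permutes S" "finite S" by fact+
  show "\<Union>QQ \<subseteq> S"
    using assms(3) permutes_orbit_subset[OF assms(1)] by blast
  show "f x \<in> \<Union>QQ" if "x \<in> \<Union>QQ" for x
  proof -
    obtain Q where Q: "Q \<in> QQ" "x \<in> Q" using \<open>x \<in> \<Union>QQ\<close> by blast
    then obtain y where "Q = orbit f y" using assms(3) by blast
    then show ?thesis using Q by (blast intro: orbit.step)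
  qed
qed

lemma card_Union_orbits:
  assumes "f permutes S" "finite S" "finite QQ"
    and QQ: "\<And>Q. Q \<in> QQ \<Longrightarrow> \<exists>x. Q = orbit f x \<and> card Q = r"
  shows "card (\<Union>QQ) = r * card QQ"
proof -
  have "disjnt P P'" if P: "P \<in> QQ" "P' \<in> QQ" "P \<noteq> P'" for P P'
  proof -
    obtain x y where "P = orbit f x" "P' = orbit f y" using QQ P(1,2) by blast
    then show ?thesis
      using permutes_orbits_disjoint[OF assms(1,2)] P(3) unfolding disjnt_def by simp
  qed
  moreover have "finite P" if "P \<in> QQ" for P
    using QQ[OF that] permutes_finite_orbit[OF assms(1,2)] by blast
  ultimately have "card (\<Union>QQ) = sum card QQ"
    by (intro card_Union_disjoint pairwiseI)
  also have "\<dots> = r * card QQ" using QQ by simp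
  finally show ?thesis .
qed

definition cycles_of_len :: "('a \<Rightarrow> 'a) \<Rightarrow> 'a set \<Rightarrow> nat \<Rightarrow> 'a set set" where
  "cycles_of_len f S r = {orbit f x | x. x \<in> S \<and> card (orbit f x) = r}"

lemma mem_cycles_of_len: "Q \<in> cycles_of_len f S r \<longleftrightarrow> (\<exists>x\<in>S. Q = orbit f x \<and> card Q = r)"
  unfolding cycles_of_len_def by auto

lemma finite_cycles_of_len:
  assumes "f permutes S" "finite S"
  shows "finite (cycles_of_len f S r)"
proof (rule finite_subset)
  show "cycles_of_len f S r \<subseteq> Pow S"
    unfolding cycles_of_len_def using permutes_orbit_subset[OF assms(1)] by blast
qed (use assms in simp)

context invariant_subset
begin

lemma cycles_of_len_restrict:
  "cycles_of_len (perm_restrict f T) T r = {orbit f x | x. x \<in> T \<and> card (orbit f x) = r}"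
  unfolding cycles_of_len_def by (auto simp: orbit_restrict) (use orbit_restrict in fastforce)

lemma cycles_of_len_restrict_eq:
  "cycles_of_len (perm_restrict f T) T r = {Q \<in> cycles_of_len f S r. Q \<subseteq> T}"
  unfolding cycles_of_len_restrict
proof (intro set_eqI iffI)
  fix Q assume "Q \<in> {orbit f x |x. x \<in> T \<and> card (orbit f x) = r}"
  then obtain x where "x \<in> T" "Q = orbit f x" "card Q = r" by blast
  then show "Q \<in> {Q \<in> cycles_of_len f S r. Q \<subseteq> T}"
    using subset orbit_subset unfolding cycles_of_len_def by auto
next
  fix Q assume "Q \<in> {Q \<in> cycles_of_len f S r. Q \<subseteq> T}"
  then obtain x where x: "Q = orbit f x" "card Q = r" "Q \<subseteq> T"
    unfolding cycles_of_len_def by blast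
  then have "x \<in> T" using permutes_self_in_orbit[OF permutes finite] by blast
  then show "Q \<in> {orbit f x |x. x \<in> T \<and> card (orbit f x) = r}" using x by auto
qed

lemma card_cycles_of_len_split:
  "card (cycles_of_len f S r) = card (cycles_of_len (perm_restrict f T) T r)
     + card (cycles_of_len (perm_restrict f (S - T)) (S - T) r)"
proof -
  interpret C: invariant_subset f S "S - T" by (rule complement)
  have "Q \<subseteq> T \<or> Q \<subseteq> S - T" if Q: "Q \<in> cycles_of_len f S r" for Q
  proof -
    obtain x where "x \<in> S" "Q = orbit f x" using Q unfolding cycles_of_len_def by blast
    then show ?thesis using orbit_subset C.orbit_subset by (cases "x \<in> T") auto
  qed
  then have "cycles_of_len f S r
      = cycles_of_len (perm_restrict f T) T r \<union> cycles_of_len (perm_restrict f (S - T)) (S - T) r"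
    unfolding cycles_of_len_restrict_eq C.cycles_of_len_restrict_eq by blast
  moreover have "cycles_of_len (perm_restrict f T) T r \<inter> cycles_of_len (perm_restrict f (S - T)) (S - T) r = {}"
  proof -
    have "Q \<noteq> {}" if "Q \<in> cycles_of_len f S r" for Q
      using that unfolding cycles_of_len_def by (auto simp: orbit_nonempty)
    then show ?thesis unfolding cycles_of_len_restrict_eq C.cycles_of_len_restrict_eq by blast
  qed
  ultimately show ?thesis
    using finite_cycles_of_len[OF restrict_permutes finite_invariant]
      finite_cycles_of_len[OF C.restrict_permutes C.finite_invariant]
    by (simp add: card_Un_disjoint)
qed

end

section \<open>Cycle types of n-th powers\<close>

lemma dn_spec:
  assumes "n > 0"
  shows "dn n r > 0 \<and> dn n r dvd n \<and> coprime r (n div dn n r)"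
  unfolding dn_def by (rule LeastI[of _ n]) (use assms in simp)

lemma dn_pos: "n > 0 \<Longrightarrow> dn n r > 0"
  using dn_spec by blast

lemma dn_dvd: "n > 0 \<Longrightarrow> dn n r dvd n"
  using dn_spec by blast

lemma coprime_div_dn: "n > 0 \<Longrightarrow> coprime r (n div dn n r)"
  using dn_spec by blast

lemma dn_le: "0 < d \<Longrightarrow> d dvd n \<Longrightarrow> coprime r (n div d) \<Longrightarrow> dn n r \<le> d"
  unfolding dn_def by (rule Least_le) simp

lemma dn_eq_1_iff: "n > 0 \<Longrightarrow> dn n r = 1 \<longleftrightarrow> coprime r n"
  using coprime_div_dn[of n r] dn_le[of 1 n r] dn_pos[of n r] by auto

text \<open>The divisors \<open>d\<close> of \<open>n\<close> with \<open>coprime r (n div d)\<close> are closed under gcd, because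
  \<open>n div gcd d g\<close> divides \<open>(n div d) * (n div g)\<close>; so the least one divides all of them.\<close>

lemma dn_dvd_divisor:
  assumes "n > 0" "g dvd n" "coprime r (n div g)"
  shows "dn n r dvd g"
proof -
  define d where "d = dn n r"
  define h where "h = gcd d g"
  have "d > 0" "d dvd n" "coprime r (n div d)"
    unfolding d_def using dn_spec[OF assms(1)] by auto
  have "h > 0" "h dvd d" "h dvd n"
    unfolding h_def using \<open>d > 0\<close> \<open>d dvd n\<close> by (auto intro: dvd_trans)
  define u where "u = n div d"
  define w where "w = n div g"
  have "u * d = n" "w * g = n" unfolding u_def w_def using \<open>d dvd n\<close> assms(2) by simp_all
  then have "u * w * d = n * w" "u * w * g = n * u" by (metis mult.commute mult.left_commute)+
  have "h * (u * w) = gcd (u * w * d) (u * w * g)"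
    unfolding h_def by (simp add: gcd_mult_distrib_nat ac_simps)
  also have "\<dots> = gcd (n * w) (n * u)"
    by (simp only: \<open>u * w * d = n * w\<close> \<open>u * w * g = n * u\<close>)
  also have "\<dots> = h * (n div h * gcd w u)"
    using \<open>h dvd n\<close> by (simp add: gcd_mult_distrib_nat[symmetric] mult.assoc[symmetric])
  finally have "n div h dvd u * w" using \<open>h > 0\<close> by simp
  moreover have "coprime r (u * w)"
    using \<open>coprime r (n div d)\<close> assms(3) unfolding u_def w_def by simp
  ultimately have "coprime r (n div h)" using coprime_divisors[OF dvd_refl] by blast
  then have "d \<le> h" unfolding d_def using \<open>h > 0\<close> \<open>h dvd n\<close> by (simp add: dn_le)
  then have "h = d" using \<open>h dvd d\<close> \<open>d > 0\<close> by (simp add: dvd_imp_le le_antisym)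
  then show ?thesis unfolding d_def h_def by (metis gcd_dvd2)
qed

definition admissible_perms :: "nat \<Rightarrow> 'a set \<Rightarrow> ('a \<Rightarrow> 'a) set" where
  "admissible_perms n S = {f. f permutes S \<and> (\<forall>r. dn n r dvd card (cycles_of_len f S r))}"

lemma card_cycles_of_len_funpow_on_orbit:
  assumes "s permutes S" "finite S" "a \<in> S"
  defines "L \<equiv> card (orbit s a)"
  shows "card (cycles_of_len (perm_restrict (s ^^ n) (orbit s a)) (orbit s a) r)
           = (if r = L div gcd L n then gcd L n else 0)"
proof -
  interpret invariant_subset "s ^^ n" S "orbit s a"
    using assms(1-3) by (intro invariant_subset_orbit permutes_funpow funpow_in_orbit)
  define r0 where "r0 = L div gcd L n"
  have card_r0: "card (orbit (s ^^ n) x) = r0" if "x \<in> orbit s a" for x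
    using card_orbit_funpow[OF assms(1,2)] permutes_orbit_eq[OF assms(1,2) that]
    unfolding r0_def L_def by simp
  define PP where "PP = orbit (s ^^ n) ` orbit s a"
  have cycles: "cycles_of_len (perm_restrict (s ^^ n) (orbit s a)) (orbit s a) r
                  = (if r = r0 then PP else {})"
    unfolding cycles_of_len_restrict PP_def using card_r0 by auto
  have "\<Union>PP = orbit s a"
    unfolding PP_def using orbit_subset permutes_self_in_orbit[OF permutes finite] by blast
  moreover have "card (\<Union>PP) = r0 * card PP"
    unfolding PP_def using card_r0 finite_invariant
    by (intro card_Union_orbits[OF permutes finite]) auto
  ultimately have "L = r0 * card PP" unfolding L_def by simp
  moreover have "L = r0 * gcd L n" and "L > 0"
    unfolding r0_def L_def using permutes_card_orbit_pos[OF assms(1,2)] by simp_all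
  ultimately have "card PP = gcd L n" by (metis mult_cancel_left mult_is_0 neq0_conv)
  then show ?thesis unfolding cycles r0_def by simp
qed

theorem funpow_in_admissible_perms:
  assumes "n > 0" "s permutes S" "finite S"
  shows "s ^^ n \<in> admissible_perms n S"
  using assms(3,2)
proof (induction "card S" arbitrary: S s rule: less_induct)
  case less
  show ?case
  proof (cases "S = {}")
    case True
    then show ?thesis
      using permutes_funpow[OF less.prems(2)] by (simp add: admissible_perms_def cycles_of_len_def)
  next
    case False
    then obtain a where "a \<in> S" by blast
    define Q where "Q = orbit s a"
    define L where "L = card Q"
    interpret Q: invariant_subset "s ^^ n" S Q
      unfolding Q_def using less.prems \<open>a \<in> S\<close>
      by (intro invariant_subset_orbit permutes_funpow funpow_in_orbit)
    interpret rest: invariant_subset s S "S - Q"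
      unfolding Q_def using less.prems \<open>a \<in> S\<close>
      by (intro invariant_subset.complement invariant_subset_orbit) (auto intro: orbit.step)
    have "a \<in> Q" unfolding Q_def by (rule permutes_self_in_orbit[OF less.prems(2,1)])
    then have "card (S - Q) < card S" using \<open>a \<in> S\<close> less.prems(1) by (intro psubset_card_mono) auto
    moreover have "perm_restrict (s ^^ n) (S - Q) = perm_restrict s (S - Q) ^^ n"
      by (rule ext) (simp add: rest.funpow_restrict perm_restrict_def)
    ultimately have rest_adm: "perm_restrict (s ^^ n) (S - Q) \<in> admissible_perms n (S - Q)"
      using less.hyps rest.restrict_permutes rest.finite_invariant by simp
    have "dn n r dvd card (cycles_of_len (perm_restrict (s ^^ n) Q) Q r)" for r
    proof -
      have "coprime (L div gcd L n) (n div gcd L n)"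
        using div_gcd_coprime[of L n] assms(1) by simp
      then have "dn n (L div gcd L n) dvd gcd L n" by (intro dn_dvd_divisor assms(1)) simp_all
      then show ?thesis
        unfolding Q_def L_def card_cycles_of_len_funpow_on_orbit[OF less.prems(2,1) \<open>a \<in> S\<close>]
        by (simp add: Q_def L_def)
    qed
    with rest_adm show ?thesis
      using Q.permutes by (simp add: admissible_perms_def Q.card_cycles_of_len_split)
  qed
qed

section \<open>Splitting off a block\<close>

definition uniform_cycle_perms :: "nat \<Rightarrow> 'a set \<Rightarrow> ('a \<Rightarrow> 'a) set" where
  "uniform_cycle_perms r B = {t. t permutes B \<and> (\<forall>x\<in>B. card (orbit t x) = r)}"

definition dn_blocks :: "nat \<Rightarrow> 'a set \<Rightarrow> ('a \<Rightarrow> 'a) set" where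
  "dn_blocks n B = (\<Union>r\<in>{r. card B = r * dn n r}. uniform_cycle_perms r B)"

lemma obtain_subset_with_card_containing:
  assumes "finite C" "c \<in> C" "0 < d" "d \<le> card C"
  obtains D where "D \<subseteq> C" "c \<in> D" "card D = d"
proof -
  have "d - 1 \<le> card (C - {c})" using assms by simp
  then obtain D where D: "D \<subseteq> C - {c}" "card D = d - 1"
    by (meson obtain_subset_with_card_n)
  moreover have "finite D" "c \<notin> D" using D assms(1) by (auto intro: finite_subset)
  ultimately show ?thesis using assms by (intro that[of "insert c D"]) auto
qed

lemma orbit_in_Union_orbits:
  assumes "f permutes S" "finite S" "\<And>Q. Q \<in> QQ \<Longrightarrow> \<exists>y. Q = orbit f y" "x \<in> \<Union>QQ"
  shows "orbit f x \<in> QQ"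
proof -
  obtain Q where "Q \<in> QQ" "x \<in> Q" using assms(4) by blast
  moreover obtain y where "Q = orbit f y" using assms(3) \<open>Q \<in> QQ\<close> by blast
  ultimately show ?thesis using permutes_orbit_eq[OF assms(1,2)] by simp
qed

lemma cycles_of_len_restrict_Union:
  assumes "f permutes S" "finite S" "QQ \<subseteq> cycles_of_len f S r"
  shows "cycles_of_len (perm_restrict f (\<Union>QQ)) (\<Union>QQ) r' = (if r' = r then QQ else {})"
proof -
  have QQ: "\<exists>y\<in>S. Q = orbit f y \<and> card Q = r" if "Q \<in> QQ" for Q
    using assms(3) that by (auto simp: mem_cycles_of_len)
  interpret invariant_subset f S "\<Union>QQ"
    using QQ by (intro invariant_subset_Union_orbits assms(1,2)) blast
  have orb: "orbit f x \<in> QQ" if "x \<in> \<Union>QQ" for x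
    using QQ that by (intro orbit_in_Union_orbits[OF assms(1,2)]) blast+
  show ?thesis
  proof (intro set_eqI iffI)
    fix Q assume "Q \<in> cycles_of_len (perm_restrict f (\<Union>QQ)) (\<Union>QQ) r'"
    then obtain x where "x \<in> \<Union>QQ" "Q = orbit f x" "card Q = r'"
      unfolding cycles_of_len_restrict by blast
    with orb QQ show "Q \<in> (if r' = r then QQ else {})" by force
  next
    fix Q assume "Q \<in> (if r' = r then QQ else {})"
    then have "Q \<in> QQ" "r' = r" by (auto split: if_splits)
    then obtain y where "Q = orbit f y" "card Q = r'" using QQ by blast
    moreover have "y \<in> \<Union>QQ"
      using \<open>Q \<in> QQ\<close> \<open>Q = orbit f y\<close> permutes_self_in_orbit[OF assms(1,2)] by blast
    ultimately show "Q \<in> cycles_of_len (perm_restrict f (\<Union>QQ)) (\<Union>QQ) r'"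
      unfolding cycles_of_len_restrict by auto
  qed
qed

lemma restrict_Union_cycles_in_dn_blocks:
  assumes "f permutes S" "finite S" "QQ \<subseteq> cycles_of_len f S r" "card QQ = dn n r"
  shows "perm_restrict f (\<Union>QQ) \<in> dn_blocks n (\<Union>QQ)"
proof -
  have QQ: "\<exists>y\<in>S. Q = orbit f y \<and> card Q = r" if "Q \<in> QQ" for Q
    using assms(3) that by (auto simp: mem_cycles_of_len)
  interpret invariant_subset f S "\<Union>QQ"
    using QQ by (intro invariant_subset_Union_orbits assms(1,2)) blast
  have "card (orbit (perm_restrict f (\<Union>QQ)) x) = r" if "x \<in> \<Union>QQ" for x
  proof -
    have "orbit f x \<in> QQ"
      using QQ that by (intro orbit_in_Union_orbits[OF assms(1,2)]) blast+
    then show ?thesis unfolding orbit_restrict[OF that] using QQ by blast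
  qed
  moreover have "finite QQ"
    using assms(3) finite_cycles_of_len[OF assms(1,2), of r] by (rule finite_subset)
  then have "card (\<Union>QQ) = r * dn n r"
    unfolding assms(4)[symmetric] using QQ by (intro card_Union_orbits[OF assms(1,2)]) blast+
  ultimately show ?thesis
    using restrict_permutes by (auto simp: dn_blocks_def uniform_cycle_perms_def)
qed

lemma admissible_perms_split:
  assumes "n > 0" "finite S" "f \<in> admissible_perms n S" "a \<in> S"
  shows "\<exists>B\<subseteq>S. a \<in> B \<and> perm_restrict f B \<in> dn_blocks n B
           \<and> perm_restrict f (S - B) \<in> admissible_perms n (S - B)"
proof -
  have f: "f permutes S" using assms(3) by (simp add: admissible_perms_def)
  define r where "r = card (orbit f a)"
  define C where "C = cycles_of_len f S r"
  have "orbit f a \<in> C" unfolding C_def r_def using assms(4) by (auto simp: mem_cycles_of_len)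
  moreover have "finite C" unfolding C_def by (rule finite_cycles_of_len[OF f assms(2)])
  moreover have "dn n r dvd card C" using assms(3) unfolding C_def admissible_perms_def by blast
  moreover have "card C > 0" using \<open>orbit f a \<in> C\<close> \<open>finite C\<close> by (auto simp: card_gt_0_iff)
  ultimately have "dn n r \<le> card C" by (simp add: dvd_imp_le)
  obtain QQ where QQ: "QQ \<subseteq> C" "orbit f a \<in> QQ" "card QQ = dn n r"
    by (rule obtain_subset_with_card_containing[OF \<open>finite C\<close> \<open>orbit f a \<in> C\<close>
          dn_pos[OF assms(1)] \<open>dn n r \<le> card C\<close>])
  define B where "B = \<Union>QQ"
  interpret B: invariant_subset f S B
    unfolding B_def using QQ(1) unfolding C_def
    by (intro invariant_subset_Union_orbits f assms(2)) (auto simp: mem_cycles_of_len)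
  interpret rest: invariant_subset f S "S - B" by (rule B.complement)
  have "a \<in> B" unfolding B_def using QQ(2) permutes_self_in_orbit[OF f assms(2), of a] by blast
  moreover have "perm_restrict f B \<in> dn_blocks n B"
    unfolding B_def using f assms(2) QQ(1,3) unfolding C_def by (rule restrict_Union_cycles_in_dn_blocks)
  moreover have "dn n r' dvd card (cycles_of_len (perm_restrict f (S - B)) (S - B) r')" for r'
  proof -
    have "cycles_of_len (perm_restrict f B) B r' = (if r' = r then QQ else {})"
      unfolding B_def using f assms(2) QQ(1) unfolding C_def by (rule cycles_of_len_restrict_Union)
    then have "card (cycles_of_len f S r') = (if r' = r then dn n r else 0)
                 + card (cycles_of_len (perm_restrict f (S - B)) (S - B) r')"
      using B.card_cycles_of_len_split[of r'] QQ(3) by simp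
    moreover have "dn n r' dvd card (cycles_of_len f S r')"
      using assms(3) by (simp add: admissible_perms_def)
    ultimately show ?thesis by (cases "r' = r") (simp_all add: dvd_add_right_iff)
  qed
  ultimately show ?thesis
    using B.subset rest.restrict_permutes by (auto simp: admissible_perms_def)
qed

section \<open>Exponentials of formal power series\<close>

lemma fps_exp_of_nth_0 [simp]: "fps_exp_of f $ 0 = 1"
  by (simp add: fps_exp_of_def fps_compose_nth)

lemma fps_deriv_exp_of: "f $ 0 = 0 \<Longrightarrow> fps_deriv (fps_exp_of f) = fps_deriv f * fps_exp_of f"
  unfolding fps_exp_of_def by (simp add: fps_compose_deriv mult.commute)

lemma fps_deriv_eq_mult_imp_eq:
  fixes F G H :: "'a :: field_char_0 fps"
  assumes "fps_deriv F = H * F" "fps_deriv G = H * G" "F $ 0 = G $ 0"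
  shows "F = G"
proof (rule fps_ext)
  fix k show "F $ k = G $ k"
  proof (induction k rule: less_induct)
    case (less k)
    show ?case
    proof (cases k)
      case (Suc j)
      have "of_nat (Suc j) * F $ Suc j = (\<Sum>i=0..j. H $ i * F $ (j - i))"
        using arg_cong[OF assms(1), of "\<lambda>F. F $ j"] by (simp add: fps_mult_nth)
      also have "\<dots> = (\<Sum>i=0..j. H $ i * G $ (j - i))"
        using less Suc by (intro sum.cong) auto
      also have "\<dots> = of_nat (Suc j) * G $ Suc j"
        using arg_cong[OF assms(2), of "\<lambda>F. F $ j"] by (simp add: fps_mult_nth)
      finally show ?thesis using Suc by (simp del: of_nat_Suc)
    qed (use assms(3) in simp)
  qed
qed

lemma fps_exp_of_add:
  assumes "f $ 0 = 0" "g $ 0 = 0"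
  shows "fps_exp_of (f + g) = fps_exp_of f * fps_exp_of g"
proof (rule fps_deriv_eq_mult_imp_eq)
  show "fps_deriv (fps_exp_of (f + g)) = fps_deriv (f + g) * fps_exp_of (f + g)"
    using assms by (simp add: fps_deriv_exp_of)
  show "fps_deriv (fps_exp_of f * fps_exp_of g) = fps_deriv (f + g) * (fps_exp_of f * fps_exp_of g)"
    using assms by (simp add: fps_deriv_exp_of algebra_simps)
qed simp

lemma fps_deriv_eq_mult_coeff_rec:
  fixes F G :: "real fps"
  assumes "fps_deriv F = fps_deriv G * F" "k > 0"
  shows "real k * F $ k = (\<Sum>m=1..k. real m * G $ m * F $ (k - m))"
proof -
  obtain j where k: "k = Suc j" using assms(2) by (cases k) auto
  have "real k * F $ k = fps_deriv F $ j" using k by simp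
  also have "\<dots> = (fps_deriv G * F) $ j" using assms(1) by simp
  also have "\<dots> = (\<Sum>i=0..j. real (Suc i) * G $ Suc i * F $ (j - i))"
    by (simp add: fps_mult_nth)
  also have "\<dots> = (\<Sum>m=Suc 0..Suc j. real m * G $ m * F $ (Suc j - m))"
    by (subst sum.shift_bounds_cl_Suc_ivl) simp
  finally show ?thesis using k by simp
qed

lemma fps_exp_of_coeff_rec:
  "f $ 0 = 0 \<Longrightarrow> k > 0 \<Longrightarrow>
    real k * fps_exp_of f $ k = (\<Sum>m=1..k. real m * f $ m * fps_exp_of f $ (k - m))"
  by (intro fps_deriv_eq_mult_coeff_rec fps_deriv_exp_of)

lemma fps_power_nth_nonneg:
  fixes F :: "real fps"
  assumes "\<And>i. F $ i \<ge> 0"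
  shows "(F ^ j) $ k \<ge> 0"
proof (induction j arbitrary: k)
  case (Suc j)
  then show ?case using assms by (simp add: fps_mult_nth sum_nonneg)
qed simp

lemma sum_fps_mult_nth_le:
  fixes F G :: "real fps"
  assumes "\<And>i. F $ i \<ge> 0" "\<And>i. G $ i \<ge> 0"
  shows "(\<Sum>k\<le>N. (F * G) $ k) \<le> (\<Sum>i\<le>N. F $ i) * (\<Sum>j\<le>N. G $ j)"
proof -
  have "(\<Sum>k\<le>N. (F * G) $ k) = (\<Sum>(i, j)\<in>{(i, j). i + j \<le> N}. F $ i * G $ j)"
    by (simp add: fps_mult_nth atLeast0AtMost sum.triangle_reindex_eq)
  also have "\<dots> \<le> (\<Sum>(i, j)\<in>{..N} \<times> {..N}. F $ i * G $ j)"
    using assms by (intro sum_mono2) auto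
  also have "\<dots> = (\<Sum>i\<le>N. F $ i) * (\<Sum>j\<le>N. G $ j)"
    by (simp add: sum_product sum.cartesian_product)
  finally show ?thesis .
qed

lemma sum_fps_power_nth_le:
  fixes F :: "real fps"
  assumes "\<And>i. F $ i \<ge> 0"
  shows "(\<Sum>k\<le>N. (F ^ j) $ k) \<le> (\<Sum>i\<le>N. F $ i) ^ j"
proof (induction j)
  case 0
  have "(\<Sum>k\<le>N. (1 :: real fps) $ k) = 1" by (simp add: sum.delta')
  then show ?case by simp
next
  case (Suc j)
  have "(\<Sum>k\<le>N. (F ^ Suc j) $ k) \<le> (\<Sum>i\<le>N. F $ i) * (\<Sum>k\<le>N. (F ^ j) $ k)"
    unfolding power_Suc by (intro sum_fps_mult_nth_le assms fps_power_nth_nonneg)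
  also have "\<dots> \<le> (\<Sum>i\<le>N. F $ i) * (\<Sum>i\<le>N. F $ i) ^ j"
    using Suc assms by (intro mult_left_mono sum_nonneg) auto
  finally show ?case by simp
qed

lemma fps_exp_of_nth_nonneg: "(\<And>i. f $ i \<ge> 0) \<Longrightarrow> fps_exp_of f $ k \<ge> 0"
  unfolding fps_exp_of_def fps_compose_nth
  by (intro sum_nonneg mult_nonneg_nonneg fps_power_nth_nonneg) auto

lemma sum_fps_exp_of_nth_le:
  fixes f :: "real fps"
  assumes "\<And>i. f $ i \<ge> 0" "(\<Sum>i\<le>N. f $ i) \<le> s"
  shows "(\<Sum>i\<le>N. fps_exp_of f $ i) \<le> exp s"
proof -
  have "s \<ge> 0" using assms by (meson order_trans sum_nonneg)
  have "(\<Sum>i\<le>N. fps_exp_of f $ i) = (\<Sum>i\<le>N. \<Sum>j\<le>i. (f ^ j) $ i / fact j)"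
    by (simp add: fps_exp_of_def fps_compose_nth atLeast0AtMost)
  also have "\<dots> \<le> (\<Sum>i\<le>N. \<Sum>j\<le>N. (f ^ j) $ i / fact j)"
    using assms(1) by (intro sum_mono sum_mono2 divide_nonneg_nonneg fps_power_nth_nonneg) auto
  also have "\<dots> = (\<Sum>j\<le>N. (\<Sum>i\<le>N. (f ^ j) $ i) / fact j)"
    by (subst sum.swap) (simp add: sum_divide_distrib)
  also have "\<dots> \<le> (\<Sum>j\<le>N. s ^ j / fact j)"
  proof (intro sum_mono divide_right_mono)
    fix j
    have "(\<Sum>i\<le>N. (f ^ j) $ i) \<le> (\<Sum>i\<le>N. f $ i) ^ j" by (rule sum_fps_power_nth_le[OF assms(1)])
    also have "\<dots> \<le> s ^ j" using assms by (intro power_mono sum_nonneg) auto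
    finally show "(\<Sum>i\<le>N. (f ^ j) $ i) \<le> s ^ j" .
  qed simp
  also have "\<dots> \<le> exp s"
  proof -
    have "(\<lambda>j. s ^ j / fact j) sums exp s"
      using exp_converges[of s] by (simp add: divide_inverse mult.commute)
    moreover have "(\<Sum>j\<le>N. s ^ j / fact j) \<le> (\<Sum>j. s ^ j / fact j)"
      using \<open>s \<ge> 0\<close> by (intro sum_le_suminf sums_summable[OF calculation]) auto
    ultimately show ?thesis by (simp add: sums_iff)
  qed
  finally show ?thesis .
qed

lemma sum_inverse_squares_le: "N \<ge> 1 \<Longrightarrow> (\<Sum>i=1..N. 1 / (real i)^2) \<le> 2 - 1 / real N"
proof (induction N rule: dec_induct)
  case (step N)
  have "1 / (real (Suc N))^2 \<le> 1 / (real N * real (Suc N))"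
    using step by (intro divide_left_mono) (auto simp: power2_eq_square)
  also have "\<dots> = 1 / real N - 1 / real (Suc N)"
    using step by (simp add: field_simps)
  finally show ?case using step by simp
qed simp

lemma sum_le_of_inverse_square_bound:
  fixes g :: "nat \<Rightarrow> real"
  assumes "\<And>j. j \<ge> 1 \<Longrightarrow> g j \<le> K / (real j)^2" "K \<ge> 0"
  shows "(\<Sum>j=1..m. g j) \<le> 2 * K"
proof (cases "m \<ge> 1")
  case True
  have "(\<Sum>j=1..m. g j) \<le> K * (\<Sum>j=1..m. 1 / (real j)^2)"
    unfolding sum_distrib_left using assms(1) by (intro sum_mono) simp
  also have "\<dots> \<le> K * 2"
  proof (intro mult_left_mono assms(2))
    show "(\<Sum>j=1..m. 1 / (real j)^2) \<le> 2"
      using sum_inverse_squares_le[OF True] by (smt (verit) of_nat_0_le_iff divide_nonneg_nonneg)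
  qed
  finally show ?thesis by simp
qed (use assms(2) in simp)

text \<open>Split the convolution at \<open>j = \<epsilon> m\<close>: for small \<open>j\<close> the factor \<open>c (m - j)\<close> is already
  of order \<open>1 / m\<^sup>2\<close>, for large \<open>j\<close> the factor \<open>j * b j\<close> is of order \<open>1 / m\<close>.\<close>

lemma convolution_term_le:
  fixes b c :: "nat \<Rightarrow> real"
  assumes "0 < \<epsilon>" "\<epsilon> \<le> 1/2" "1 \<le> j" "j \<le> m" "0 \<le> b j" "0 \<le> c (m - j)" "0 \<le> M" "0 \<le> K"
    and b: "b j \<le> K / (real j)^2" and c: "\<And>i. 1 \<le> i \<Longrightarrow> i < m \<Longrightarrow> c i \<le> M / (real i)^2"
  shows "real j * b j * c (m - j) \<le> 4 * \<epsilon> * M / real m * b j + K / (\<epsilon> * real m) * c (m - j)"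
proof -
  have "real m \<ge> 1" using assms(3,4) by simp
  have small: "0 \<le> 4 * \<epsilon> * M / real m * b j"
    using assms(1,5,7) by (intro mult_nonneg_nonneg divide_nonneg_nonneg) auto
  have large: "0 \<le> K / (\<epsilon> * real m) * c (m - j)"
    using assms(1,6,8) by (intro mult_nonneg_nonneg divide_nonneg_nonneg) auto
  show ?thesis
  proof (cases "real j \<le> \<epsilon> * real m")
    case True
    have "\<epsilon> * real m \<le> 1/2 * real m" using assms(2) by (intro mult_right_mono) auto
    then have half: "real (m - j) \<ge> real m / 2" using True assms(4) by (simp add: of_nat_diff)
    then have "real (m - j) > 0" using \<open>real m \<ge> 1\<close> by linarith
    then have "c (m - j) \<le> M / (real (m - j))^2" using assms(3) by (intro c) auto
    also have "\<dots> \<le> M / (real m / 2)^2"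
      using half \<open>real m \<ge> 1\<close> assms(7) by (intro divide_left_mono power_mono) auto
    also have "\<dots> = 4 * M / (real m)^2" by (simp add: power_divide)
    finally have "real j * b j * c (m - j) \<le> (\<epsilon> * real m) * b j * (4 * M / (real m)^2)"
      using True assms(5,6) by (intro mult_mono) auto
    also have "\<dots> = 4 * \<epsilon> * M / real m * b j" by (simp add: power2_eq_square)
    finally show ?thesis using large by linarith
  next
    case False
    have "real j * b j \<le> real j * (K / (real j)^2)" using b by (intro mult_left_mono) auto
    also have "\<dots> = K / real j" by (simp add: power2_eq_square)
    also have "\<dots> \<le> K / (\<epsilon> * real m)"
      using False assms(1,3,8) \<open>real m \<ge> 1\<close> by (intro divide_left_mono mult_pos_pos) auto
    finally have "real j * b j * c (m - j) \<le> K / (\<epsilon> * real m) * c (m - j)"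
      using assms(6) by (intro mult_right_mono)
    then show ?thesis using small by linarith
  qed
qed

lemma fps_exp_of_nth_le_inverse_square:
  fixes f :: "real fps"
  assumes nonneg: "\<And>i. f $ i \<ge> 0" and f0: "f $ 0 = 0" and "K \<ge> 1"
    and bound: "\<And>j. j \<ge> 1 \<Longrightarrow> f $ j \<le> K / (real j)^2"
  shows "m \<ge> 1 \<Longrightarrow> fps_exp_of f $ m \<le> 32 * K^2 * exp (2 * K) / (real m)^2"
proof (induction m rule: less_induct)
  case (less m)
  define M where "M = 32 * K^2 * exp (2 * K)"
  \<comment> \<open>chosen so that each half of the estimate below contributes \<open>M / (2 * m)\<close>\<close>
  define \<epsilon> where "\<epsilon> = 1 / (16 * K)"
  have "0 < \<epsilon>" "\<epsilon> \<le> 1/2" "M \<ge> 0" unfolding \<epsilon>_def M_def using \<open>K \<ge> 1\<close> by auto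
  let ?c = "\<lambda>i. fps_exp_of f $ i"
  have sum_f: "(\<Sum>j=1..m. f $ j) \<le> 2 * K"
    using bound \<open>K \<ge> 1\<close> by (intro sum_le_of_inverse_square_bound) auto
  have sum_c: "(\<Sum>j=1..m. ?c (m - j)) \<le> exp (2 * K)"
  proof -
    have "(\<Sum>j=1..m. ?c (m - j)) \<le> (\<Sum>j\<le>m. ?c (m - j))"
      using fps_exp_of_nth_nonneg[OF nonneg] by (intro sum_mono2) auto
    also have "\<dots> = (\<Sum>i\<le>m. ?c i)" by (rule sum.reindex_bij_witness[of _ "\<lambda>i. m - i" "\<lambda>i. m - i"]) auto
    also have "\<dots> \<le> exp (2 * K)"
    proof (rule sum_fps_exp_of_nth_le[OF nonneg])
      have "(\<Sum>i\<le>m. f $ i) = (\<Sum>j=1..m. f $ j)" using f0 by (simp add: atMost_atLeast0 sum.atLeast_Suc_atMost)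
      then show "(\<Sum>i\<le>m. f $ i) \<le> 2 * K" using sum_f by simp
    qed
    finally show ?thesis .
  qed
  have "real m * ?c m = (\<Sum>j=1..m. real j * f $ j * ?c (m - j))"
    using less.prems by (intro fps_exp_of_coeff_rec f0) simp
  also have "\<dots> \<le> (\<Sum>j=1..m. 4 * \<epsilon> * M / real m * f $ j + K / (\<epsilon> * real m) * ?c (m - j))"
    using \<open>0 < \<epsilon>\<close> \<open>\<epsilon> \<le> 1/2\<close> \<open>M \<ge> 0\<close> \<open>K \<ge> 1\<close> nonneg fps_exp_of_nth_nonneg[OF nonneg] bound less.IH
    by (intro sum_mono convolution_term_le) (auto simp: M_def)
  also have "\<dots> = 4 * \<epsilon> * M / real m * (\<Sum>j=1..m. f $ j) + K / (\<epsilon> * real m) * (\<Sum>j=1..m. ?c (m - j))"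
    by (simp add: sum.distrib sum_distrib_left)
  also have "\<dots> \<le> 4 * \<epsilon> * M / real m * (2 * K) + K / (\<epsilon> * real m) * exp (2 * K)"
    using sum_f sum_c \<open>0 < \<epsilon>\<close> \<open>M \<ge> 0\<close> \<open>K \<ge> 1\<close> by (intro add_mono mult_left_mono) auto
  also have "\<dots> = M / real m"
    unfolding M_def \<epsilon>_def using less.prems \<open>K \<ge> 1\<close> by (simp add: field_simps power2_eq_square)
  finally show ?case using less.prems unfolding M_def by (simp add: field_simps power2_eq_square)
qed

lemma fps_exp_of_nth_bigo_inverse_square:
  fixes f :: "real fps"
  assumes "\<And>i. f $ i \<ge> 0" "f $ 0 = 0" "\<And>j. j \<ge> 1 \<Longrightarrow> f $ j \<le> K / (real j)^2"
  shows "(\<lambda>m. fps_exp_of f $ m) \<in> O(\<lambda>m. 1 / (real m)^2)"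
proof -
  define K' where "K' = max K 1"
  have "f $ j \<le> K' / (real j)^2" if "j \<ge> 1" for j
    using assms(3)[OF that] unfolding K'_def by (smt (verit) divide_right_mono zero_le_power2)
  then have "fps_exp_of f $ m \<le> 32 * K'^2 * exp (2 * K') * (1 / (real m)^2)" if "m \<ge> 1" for m
    using fps_exp_of_nth_le_inverse_square[OF assms(1,2), of K' m] that by (simp add: K'_def)
  then show ?thesis
    using fps_exp_of_nth_nonneg[OF assms(1)]
    by (intro bigoI[where c = "32 * K'^2 * exp (2 * K')"] eventually_at_top_linorder[THEN iffD2]) auto
qed

section \<open>Counting permutations\<close>

lemma finite_permutes_family:
  assumes "finite S" "\<And>p. p \<in> P \<Longrightarrow> p permutes S"
  shows "finite P"
proof (rule finite_subset)
  show "P \<subseteq> {p. p permutes S}" using assms(2) by blast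
qed (rule finite_permutations[OF assms(1)])

lemma card_permutes_empty_family_le:
  assumes "\<And>p. p \<in> P \<Longrightarrow> p permutes {}"
  shows "card P \<le> 1"
proof -
  have "P \<subseteq> {id}" using assms permutes_empty by blast
  then show ?thesis using card_mono[of "{id}" P] by simp
qed

lemma permutes_eq_by_restrict:
  assumes "p permutes S" "q permutes S"
    and "perm_restrict p B = perm_restrict q B" "perm_restrict p (S - B) = perm_restrict q (S - B)"
  shows "p = q"
proof
  fix x
  show "p x = q x"
    using fun_cong[OF assms(3), of x] fun_cong[OF assms(4), of x] assms(1,2)
    by (cases "x \<in> B"; cases "x \<in> S") (auto simp: perm_restrict_def permutes_not_in)
qed

lemma card_le_sum_card_restrictions:
  assumes "finite S" "\<And>p. p \<in> P \<Longrightarrow> p permutes S" "finite BB"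
    and "\<And>B. B \<in> BB \<Longrightarrow> finite (X B)" "\<And>B. B \<in> BB \<Longrightarrow> finite (Y B)"
    and split: "\<And>p. p \<in> P \<Longrightarrow> \<exists>B\<in>BB. perm_restrict p B \<in> X B \<and> perm_restrict p (S - B) \<in> Y B"
  shows "card P \<le> (\<Sum>B\<in>BB. card (X B) * card (Y B))"
proof -
  define PB where "PB B = {p \<in> P. perm_restrict p B \<in> X B \<and> perm_restrict p (S - B) \<in> Y B}" for B
  have "finite P" using assms(1,2) by (rule finite_permutes_family)
  then have "finite (\<Union>B\<in>BB. PB B)" using assms(3) by (simp add: PB_def)
  moreover have "P \<subseteq> (\<Union>B\<in>BB. PB B)" using split unfolding PB_def by blast
  ultimately have "card P \<le> card (\<Union>B\<in>BB. PB B)" by (rule card_mono)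
  also have "\<dots> \<le> (\<Sum>B\<in>BB. card (PB B))" by (rule card_UN_le[OF assms(3)])
  also have "\<dots> \<le> (\<Sum>B\<in>BB. card (X B) * card (Y B))"
  proof (rule sum_mono)
    fix B assume "B \<in> BB"
    have "inj_on (\<lambda>p. (perm_restrict p B, perm_restrict p (S - B))) (PB B)"
    proof (rule inj_onI)
      fix p q assume "p \<in> PB B" "q \<in> PB B"
        and "(perm_restrict p B, perm_restrict p (S - B)) = (perm_restrict q B, perm_restrict q (S - B))"
      then show "p = q" using assms(2) by (intro permutes_eq_by_restrict[of p S q]) (auto simp: PB_def)
    qed
    then have "card (PB B) \<le> card (X B \<times> Y B)"
      using assms(4,5)[OF \<open>B \<in> BB\<close>] by (intro card_inj_on_le) (auto simp: PB_def)
    then show "card (PB B) \<le> card (X B) * card (Y B)" by (simp add: card_cartesian_product)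
  qed
  finally show ?thesis .
qed

lemma card_subsets_containing:
  assumes "finite B" "a \<in> B" "k > 0"
  shows "card {Q. Q \<subseteq> B \<and> a \<in> Q \<and> card Q = k} = (card B - 1) choose (k - 1)"
proof -
  have "bij_betw (\<lambda>Q. Q - {a}) {Q. Q \<subseteq> B \<and> a \<in> Q \<and> card Q = k} {Q. Q \<subseteq> B - {a} \<and> card Q = k - 1}"
  proof (rule bij_betw_byWitness[where f' = "insert a"])
    show "(\<lambda>Q. Q - {a}) ` {Q. Q \<subseteq> B \<and> a \<in> Q \<and> card Q = k} \<subseteq> {Q. Q \<subseteq> B - {a} \<and> card Q = k - 1}"
      by auto
    show "insert a ` {Q. Q \<subseteq> B - {a} \<and> card Q = k - 1} \<subseteq> {Q. Q \<subseteq> B \<and> a \<in> Q \<and> card Q = k}"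
    proof (rule image_subsetI)
      fix Q assume Q: "Q \<in> {Q. Q \<subseteq> B - {a} \<and> card Q = k - 1}"
      then have "finite Q" "a \<notin> Q" using assms(1) finite_subset by auto
      then show "insert a Q \<in> {Q. Q \<subseteq> B \<and> a \<in> Q \<and> card Q = k}" using Q assms by auto
    qed
  qed auto
  then show ?thesis using assms by (simp add: bij_betw_same_card n_subsets)
qed

lemma sum_subsets_containing_by_card:
  fixes g :: "nat \<Rightarrow> real"
  assumes "finite S" "a \<in> S"
  shows "(\<Sum>B\<in>{B. B \<subseteq> S \<and> a \<in> B}. g (card B))
           = (\<Sum>m=1..card S. real ((card S - 1) choose (m - 1)) * g m)"
proof -
  define BB where "BB = {B. B \<subseteq> S \<and> a \<in> B}"
  have "finite BB" unfolding BB_def using assms(1) by simp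
  moreover have "card ` BB \<subseteq> {1..card S}"
  proof
    fix m assume "m \<in> card ` BB"
    then obtain B where "B \<subseteq> S" "a \<in> B" "m = card B" unfolding BB_def by blast
    moreover have "finite B" using \<open>B \<subseteq> S\<close> assms(1) by (rule finite_subset)
    ultimately show "m \<in> {1..card S}"
      using assms(1) by (auto simp: Suc_le_eq card_gt_0_iff intro: card_mono)
  qed
  ultimately have "(\<Sum>B\<in>BB. g (card B)) = (\<Sum>m=1..card S. \<Sum>B\<in>{B\<in>BB. card B = m}. g (card B))"
    by (intro sum.group[symmetric]) simp_all
  also have "\<dots> = (\<Sum>m=1..card S. real ((card S - 1) choose (m - 1)) * g m)"
  proof (rule sum.cong[OF refl])
    fix m assume "m \<in> {1..card S}"
    then have "card {B\<in>BB. card B = m} = (card S - 1) choose (m - 1)"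
      unfolding BB_def using card_subsets_containing[OF assms, of m] by (simp add: conj_assoc)
    then show "(\<Sum>B\<in>{B\<in>BB. card B = m}. g (card B)) = real ((card S - 1) choose (m - 1)) * g m"
      by simp
  qed
  finally show ?thesis unfolding BB_def .
qed

lemma uniform_cycle_perms_card_orbit:
  assumes "t \<in> uniform_cycle_perms (card C) C" "finite C" "a \<in> C"
  shows "orbit t a = C"
proof -
  have "t permutes C" "card (orbit t a) = card C"
    using assms(1,3) by (auto simp: uniform_cycle_perms_def)
  then show ?thesis
    using permutes_orbit_subset[OF _ assms(3)] assms(2) by (metis card_subset_eq)
qed

lemma permutes_eq_if_funpow_eq_on_orbit:
  assumes "s permutes C" "t permutes C" "finite C" "orbit s a = C"
    and eq: "\<And>i. i \<le> card C \<Longrightarrow> (s ^^ i) a = (t ^^ i) a"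
  shows "s = t"
proof
  fix x
  show "s x = t x"
  proof (cases "x \<in> C")
    case True
    obtain i where i: "i < card C" "x = (s ^^ i) a"
      using True unfolding assms(4)[symmetric]
      by (subst (asm) permutes_orbit_enumeration(1)[OF assms(1,3)]) auto
    then have "s x = (t ^^ Suc i) a" using eq[of "Suc i"] by simp
    also have "\<dots> = t x" using eq[of i] i by simp
    finally show ?thesis .
  qed (use assms(1,2) in \<open>simp add: permutes_not_in\<close>)
qed

text \<open>A cyclic permutation of \<open>C\<close> is determined by the sequence \<open>t a, t\<^sup>2 a, \<dots>\<close>, which
  enumerates \<open>C - {a}\<close>.\<close>

lemma card_cyclic_perms_le:
  assumes "finite C" "a \<in> C"
  shows "card (uniform_cycle_perms (card C) C) \<le> fact (card C - 1)"
proof -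
  define r where "r = card C"
  define enum where "enum t = map (\<lambda>i. (t ^^ i) a) [1..<r]" for t :: "'a \<Rightarrow> 'a"
  have props: "t permutes C" "(\<lambda>i. (t ^^ i) a) ` {0..<r} = C" "inj_on (\<lambda>i. (t ^^ i) a) {0..<r}"
      "(t ^^ r) a = a"
    if t: "t \<in> uniform_cycle_perms r C" for t
  proof -
    show tC: "t permutes C" using t by (simp add: uniform_cycle_perms_def)
    have "orbit t a = C" using t assms unfolding r_def by (rule uniform_cycle_perms_card_orbit)
    then show "(\<lambda>i. (t ^^ i) a) ` {0..<r} = C" "inj_on (\<lambda>i. (t ^^ i) a) {0..<r}" "(t ^^ r) a = a"
      using permutes_orbit_enumeration[OF tC assms(1), of a] permutes_funpow_eq_self_iff[OF tC assms(1)]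
      unfolding r_def by simp_all
  qed
  have "enum t \<in> permutations_of_set (C - {a})" if t: "t \<in> uniform_cycle_perms r C" for t
  proof
    have "0 < r" using assms card_gt_0_iff r_def by blast
    then have "{0..<r} = insert 0 {1..<r}" by auto
    then have "inj_on (\<lambda>i. (t ^^ i) a) (insert 0 {1..<r})" using props(3)[OF t] by simp
    then have "(\<lambda>i. (t ^^ i) a) ` {1..<r} = (\<lambda>i. (t ^^ i) a) ` {0..<r} - {a}"
      using \<open>{0..<r} = insert 0 {1..<r}\<close> by (simp add: inj_on_insert)
    then show "set (enum t) = C - {a}" unfolding enum_def props(2)[OF t] by simp
    show "distinct (enum t)"
      using props(3)[OF t] unfolding enum_def distinct_map by (auto intro: inj_on_subset)
  qed
  moreover have "inj_on enum (uniform_cycle_perms r C)"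
  proof (rule inj_onI)
    fix s t assume st: "s \<in> uniform_cycle_perms r C" "t \<in> uniform_cycle_perms r C" "enum s = enum t"
    have "\<forall>i\<in>{1..<r}. (s ^^ i) a = (t ^^ i) a"
      using st(3) unfolding enum_def map_eq_conv by simp
    then have "(s ^^ i) a = (t ^^ i) a" if "i \<le> card C" for i
      using that props(4)[OF st(1)] props(4)[OF st(2)] unfolding r_def
      by (cases "i = 0 \<or> i = card C") auto
    moreover have "orbit s a = C" using st(1) assms unfolding r_def by (rule uniform_cycle_perms_card_orbit)
    ultimately show "s = t"
      using permutes_eq_if_funpow_eq_on_orbit[OF props(1)[OF st(1)] props(1)[OF st(2)] assms(1)] by blast
  qed
  ultimately have "card (uniform_cycle_perms r C) \<le> card (permutations_of_set (C - {a}))"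
    using assms(1) by (intro card_inj_on_le) auto
  then show ?thesis using assms by (simp add: r_def card_permutations_of_set)
qed

lemma finite_uniform_cycle_perms: "finite B \<Longrightarrow> finite (uniform_cycle_perms r B)"
  by (rule finite_permutes_family) (auto simp: uniform_cycle_perms_def)

lemma uniform_cycle_perms_split_orbit:
  assumes "p \<in> uniform_cycle_perms r B" "finite B" "a \<in> B"
  shows "orbit p a \<in> {Q. Q \<subseteq> B \<and> a \<in> Q \<and> card Q = r}"
    and "perm_restrict p (orbit p a) \<in> uniform_cycle_perms r (orbit p a)"
    and "perm_restrict p (B - orbit p a) \<in> uniform_cycle_perms r (B - orbit p a)"
proof -
  have p: "p permutes B" and r: "\<forall>x\<in>B. card (orbit p x) = r"
    using assms(1) by (auto simp: uniform_cycle_perms_def)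
  interpret Q: invariant_subset p B "orbit p a"
    using p assms(2,3) by (intro invariant_subset_orbit) (auto intro: orbit.step)
  interpret R: invariant_subset p B "B - orbit p a" by (rule Q.complement)
  show "orbit p a \<in> {Q. Q \<subseteq> B \<and> a \<in> Q \<and> card Q = r}"
    using Q.subset permutes_self_in_orbit[OF p assms(2)] r assms(3) by auto
  show "perm_restrict p (orbit p a) \<in> uniform_cycle_perms r (orbit p a)"
    using Q.restrict_permutes Q.orbit_restrict Q.subset r by (auto simp: uniform_cycle_perms_def)
  show "perm_restrict p (B - orbit p a) \<in> uniform_cycle_perms r (B - orbit p a)"
    using R.restrict_permutes R.orbit_restrict r by (auto simp: uniform_cycle_perms_def)
qed

lemma card_uniform_cycle_perms_le_sum:
  assumes "finite B" "a \<in> B"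
  shows "card (uniform_cycle_perms r B)
           \<le> (\<Sum>Q | Q \<subseteq> B \<and> a \<in> Q \<and> card Q = r.
                 card (uniform_cycle_perms r Q) * card (uniform_cycle_perms r (B - Q)))"
proof (rule card_le_sum_card_restrictions[OF assms(1)])
  show "\<exists>Q\<in>{Q. Q \<subseteq> B \<and> a \<in> Q \<and> card Q = r}. perm_restrict p Q \<in> uniform_cycle_perms r Q
          \<and> perm_restrict p (B - Q) \<in> uniform_cycle_perms r (B - Q)"
    if "p \<in> uniform_cycle_perms r B" for p
    using uniform_cycle_perms_split_orbit[OF that assms] by blast
  show "finite (uniform_cycle_perms r Q)" if "Q \<in> {Q. Q \<subseteq> B \<and> a \<in> Q \<and> card Q = r}" for Q
    using that assms(1) by (intro finite_uniform_cycle_perms) (auto intro: rev_finite_subset)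
  show "finite (uniform_cycle_perms r (B - Q))" for Q
    using assms(1) by (simp add: finite_uniform_cycle_perms)
qed (use assms(1) in \<open>simp_all add: uniform_cycle_perms_def\<close>)

lemma binomial_fact_div_power_le:
  assumes "0 < r" "0 < m"
  shows "real ((m - 1) choose (r - 1)) * (fact (r - 1) * (fact (m - r) / real r ^ ((m - r) div r)))
           \<le> fact m / real r ^ (m div r)"
proof (cases "r \<le> m")
  case True
  have "m div r = ((m - r) + r) div r" using True by simp
  also have "\<dots> = Suc ((m - r) div r)" using assms(1) by simp
  finally have md: "m div r = Suc ((m - r) div r)" .
  have "real ((m - 1) choose (r - 1)) * (fact (r - 1) * (fact (m - r) / real r ^ ((m - r) div r)))
      = fact (m - 1) / real r ^ ((m - r) div r)"
    using True assms by (simp add: binomial_fact diff_le_mono Suc_diff_le)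
  also have "\<dots> = real r * fact (m - 1) / real r ^ (m div r)"
    using assms(1) md by simp
  also have "\<dots> \<le> real m * fact (m - 1) / real r ^ (m div r)"
    using True by (intro divide_right_mono mult_right_mono) auto
  also have "\<dots> = fact m / real r ^ (m div r)"
    using assms(2) by (simp add: fact_reduce)
  finally show ?thesis .
qed (use assms in \<open>simp add: binomial_eq_0\<close>)

lemma card_uniform_cycle_perms_le:
  assumes "finite B" "r > 0"
  shows "real (card (uniform_cycle_perms r B)) \<le> fact (card B) / real r ^ (card B div r)"
  using assms(1)
proof (induction "card B" arbitrary: B rule: less_induct)
  case less
  show ?case
  proof (cases "B = {}")
    case True
    then have "card (uniform_cycle_perms r B) \<le> 1"
      by (intro card_permutes_empty_family_le) (simp add: uniform_cycle_perms_def)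
    then show ?thesis using True by simp
  next
    case False
    then obtain a where "a \<in> B" by blast
    define m where "m = card B"
    define BB where "BB = {Q. Q \<subseteq> B \<and> a \<in> Q \<and> card Q = r}"
    have "card (uniform_cycle_perms r B)
        \<le> (\<Sum>Q\<in>BB. card (uniform_cycle_perms r Q) * card (uniform_cycle_perms r (B - Q)))"
      unfolding BB_def by (rule card_uniform_cycle_perms_le_sum[OF less.prems \<open>a \<in> B\<close>])
    then have "real (card (uniform_cycle_perms r B))
        \<le> (\<Sum>Q\<in>BB. real (card (uniform_cycle_perms r Q)) * real (card (uniform_cycle_perms r (B - Q))))"
      by (simp flip: of_nat_mult of_nat_sum)
    also have "\<dots> \<le> (\<Sum>Q\<in>BB. fact (r - 1) * (fact (m - r) / real r ^ ((m - r) div r)))"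
    proof (intro sum_mono mult_mono)
      fix Q assume "Q \<in> BB"
      then have "Q \<subseteq> B" "a \<in> Q" "card Q = r" unfolding BB_def by auto
      then have "finite Q" using less.prems finite_subset by blast
      have "card (uniform_cycle_perms r Q) \<le> fact (r - 1)"
        using card_cyclic_perms_le[OF \<open>finite Q\<close> \<open>a \<in> Q\<close>] \<open>card Q = r\<close> by simp
      then show "real (card (uniform_cycle_perms r Q)) \<le> fact (r - 1)"
        using of_nat_mono by fastforce
      have "card (B - Q) = m - r"
        using \<open>Q \<subseteq> B\<close> \<open>card Q = r\<close> \<open>finite Q\<close> by (simp add: m_def card_Diff_subset)
      moreover have "card (B - Q) < card B"
        using \<open>Q \<subseteq> B\<close> \<open>a \<in> Q\<close> less.prems by (intro psubset_card_mono) auto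
      ultimately show "real (card (uniform_cycle_perms r (B - Q))) \<le> fact (m - r) / real r ^ ((m - r) div r)"
        using less.hyps[of "B - Q"] less.prems by simp
    qed auto
    also have "\<dots> = real ((m - 1) choose (r - 1)) * (fact (r - 1) * (fact (m - r) / real r ^ ((m - r) div r)))"
      using card_subsets_containing[OF less.prems \<open>a \<in> B\<close> assms(2)] by (simp add: BB_def m_def)
    also have "\<dots> \<le> fact m / real r ^ (m div r)"
      using assms(2) \<open>a \<in> B\<close> less.prems by (intro binomial_fact_div_power_le) (auto simp: m_def card_gt_0_iff)
    finally show ?thesis unfolding m_def .
  qed
qed

definition q1_log :: "nat \<Rightarrow> real fps" where
  "q1_log n = Abs_fps (\<lambda>r. if r \<ge> 1 \<and> coprime r n then 1 / real r else 0)"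

definition q2_log :: "nat \<Rightarrow> real fps" where
  "q2_log n = Abs_fps (\<lambda>m. \<Sum>r\<in>{r. 1 \<le> r \<and> r \<le> m \<and> gcd r n > 1 \<and> r * dn n r = m}. 1 / (real r)^2)"

lemma q1_eq_exp_of: "q1 n = fps_exp_of (q1_log n)"
  unfolding q1_def q1_log_def ..

lemma q2_eq_exp_of: "q2 n = fps_exp_of (q2_log n)"
  unfolding q2_def q2_log_def ..

lemma q1_log_nth_0 [simp]: "q1_log n $ 0 = 0"
  by (simp add: q1_log_def)

lemma q2_log_nth_0 [simp]: "q2_log n $ 0 = 0"
  by (simp add: q2_log_def)

lemma q1_mult_q2: "q1 n * q2 n = fps_exp_of (q1_log n + q2_log n)"
  by (simp add: q1_eq_exp_of q2_eq_exp_of fps_exp_of_add)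

lemma sum_inverse_power_dn_le:
  assumes "n > 0" "m > 0"
  shows "(\<Sum>r\<in>{r. m = r * dn n r}. 1 / real r ^ dn n r) \<le> (q1_log n + q2_log n) $ m"
proof -
  define R where "R = {r. m = r * dn n r}"
  define R2 where "R2 = {r. 1 \<le> r \<and> r \<le> m \<and> gcd r n > 1 \<and> r * dn n r = m}"
  have R: "r \<in> R \<longleftrightarrow> 1 \<le> r \<and> r \<le> m \<and> r * dn n r = m" for r
    using assms dn_pos[OF assms(1), of r] by (auto simp: R_def)
  have "finite R" using R by (intro finite_subset[of R "{..m}"]) auto
  have "r \<in> R \<and> coprime r n \<longleftrightarrow> r = m \<and> coprime m n" for r
    using dn_eq_1_iff[OF assms(1), of r] dn_eq_1_iff[OF assms(1), of m] by (auto simp: R_def)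
  then have coprime_part: "R \<inter> {r. coprime r n} = (if coprime m n then {m} else {})" by auto
  have R2: "R - {r. coprime r n} = R2"
    using R by (auto simp: R2_def coprime_iff_gcd_eq_1 nat_neq_iff)
  have "(\<Sum>r\<in>R. 1 / real r ^ dn n r)
      = (\<Sum>r\<in>R \<inter> {r. coprime r n}. 1 / real r ^ dn n r) + (\<Sum>r\<in>R2. 1 / real r ^ dn n r)"
    using sum.Int_Diff[OF \<open>finite R\<close>] R2 by metis
  also have "(\<Sum>r\<in>R \<inter> {r. coprime r n}. 1 / real r ^ dn n r) = q1_log n $ m"
    unfolding coprime_part using dn_eq_1_iff[OF assms(1), of m] assms(2)
    by (cases "coprime m n") (simp_all add: q1_log_def)
  also have "(\<Sum>r\<in>R2. 1 / real r ^ dn n r) \<le> (\<Sum>r\<in>R2. 1 / (real r)^2)"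
  proof (rule sum_mono)
    fix r assume "r \<in> R2"
    then have "1 \<le> r" "\<not> coprime r n" by (auto simp: R2_def coprime_iff_gcd_eq_1)
    then have "2 \<le> dn n r" using dn_eq_1_iff[OF assms(1)] dn_pos[OF assms(1), of r] by fastforce
    then show "1 / real r ^ dn n r \<le> 1 / (real r)^2"
      using \<open>1 \<le> r\<close> by (intro divide_left_mono power_increasing) auto
  qed
  also have "(\<Sum>r\<in>R2. 1 / (real r)^2) = q2_log n $ m" by (simp add: q2_log_def R2_def)
  finally show ?thesis unfolding R_def by simp
qed

lemma card_dn_blocks_le:
  assumes "n > 0" "finite B" "B \<noteq> {}"
  shows "real (card (dn_blocks n B)) \<le> fact (card B) * (q1_log n + q2_log n) $ card B"
proof -
  define m where "m = card B"
  define R where "R = {r. m = r * dn n r}"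
  have "m > 0" using assms(2,3) by (simp add: m_def card_gt_0_iff)
  have r_pos: "r > 0" if "r \<in> R" for r using that \<open>m > 0\<close> by (auto simp: R_def)
  have "r \<le> m" if "r \<in> R" for r
    using that dn_pos[OF assms(1), of r] \<open>m > 0\<close> by (auto simp: R_def)
  then have "finite R" by (intro finite_subset[of R "{..m}"]) auto
  have "card (dn_blocks n B) \<le> (\<Sum>r\<in>R. card (uniform_cycle_perms r B))"
    unfolding dn_blocks_def R_def m_def by (rule card_UN_le) (use \<open>finite R\<close> in \<open>simp add: R_def m_def\<close>)
  then have "real (card (dn_blocks n B)) \<le> (\<Sum>r\<in>R. real (card (uniform_cycle_perms r B)))"
    by (simp flip: of_nat_sum)
  also have "\<dots> \<le> (\<Sum>r\<in>R. fact m * (1 / real r ^ dn n r))"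
  proof (rule sum_mono)
    fix r assume "r \<in> R"
    then have "m div r = dn n r" using r_pos by (simp add: R_def)
    then show "real (card (uniform_cycle_perms r B)) \<le> fact m * (1 / real r ^ dn n r)"
      using card_uniform_cycle_perms_le[OF assms(2) r_pos[OF \<open>r \<in> R\<close>]] by (simp add: m_def)
  qed
  also have "\<dots> \<le> fact m * (q1_log n + q2_log n) $ m"
    unfolding sum_distrib_left[symmetric] R_def
    using sum_inverse_power_dn_le[OF assms(1) \<open>m > 0\<close>] by (intro mult_left_mono) auto
  finally show ?thesis unfolding m_def .
qed

lemma fps_exp_of_nth_binomial_rec:
  assumes "b $ 0 = 0" "k > 0"
  shows "(\<Sum>m=1..k. real ((k - 1) choose (m - 1)) * (fact m * b $ m * (fact (k - m) * fps_exp_of b $ (k - m))))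
           = fact k * fps_exp_of b $ k"
proof -
  have "real ((k - 1) choose (m - 1)) * (fact m * b $ m * (fact (k - m) * fps_exp_of b $ (k - m)))
      = fact (k - 1) * (real m * b $ m * fps_exp_of b $ (k - m))" if "m \<in> {1..k}" for m
  proof -
    have "real ((k - 1) choose (m - 1)) = fact (k - 1) / (fact (m - 1) * fact (k - m))"
      using that by (subst binomial_fact) (auto simp: diff_le_mono)
    moreover have "(fact m :: real) = real m * fact (m - 1)" using that by (simp add: fact_reduce)
    ultimately show ?thesis by (simp add: field_simps)
  qed
  then have "(\<Sum>m=1..k. real ((k - 1) choose (m - 1)) * (fact m * b $ m * (fact (k - m) * fps_exp_of b $ (k - m))))
      = (\<Sum>m=1..k. fact (k - 1) * (real m * b $ m * fps_exp_of b $ (k - m)))"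
    by (rule sum.cong[OF refl])
  also have "\<dots> = fact (k - 1) * (\<Sum>m=1..k. real m * b $ m * fps_exp_of b $ (k - m))"
    by (simp add: sum_distrib_left)
  also have "\<dots> = fact (k - 1) * (real k * fps_exp_of b $ k)"
    using fps_exp_of_coeff_rec[OF assms] by simp
  also have "\<dots> = fact k * fps_exp_of b $ k" using assms(2) by (simp add: fact_reduce)
  finally show ?thesis .
qed

lemma sum_subsets_containing_exp_coeff:
  assumes "finite S" "a \<in> S" "b $ 0 = 0"
  shows "(\<Sum>B | B \<subseteq> S \<and> a \<in> B.
            fact (card B) * b $ card B * (fact (card S - card B) * fps_exp_of b $ (card S - card B)))
         = fact (card S) * fps_exp_of b $ card S"
proof -
  have "card S > 0" using assms(1,2) card_gt_0_iff by blast
  have "(\<Sum>B | B \<subseteq> S \<and> a \<in> B.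
            fact (card B) * b $ card B * (fact (card S - card B) * fps_exp_of b $ (card S - card B)))
      = (\<Sum>m=1..card S. real ((card S - 1) choose (m - 1))
            * (fact m * b $ m * (fact (card S - m) * fps_exp_of b $ (card S - m))))"
    by (rule sum_subsets_containing_by_card[OF assms(1,2)])
  also have "\<dots> = fact (card S) * fps_exp_of b $ card S"
    by (rule fps_exp_of_nth_binomial_rec[OF assms(3) \<open>card S > 0\<close>])
  finally show ?thesis .
qed

text \<open>An inequality version of the exponential formula, with \<open>b\<close> bounding the exponential
  generating function of the blocks.\<close>

lemma card_le_fact_mult_exp_coeff:
  fixes A Blk :: "'a set \<Rightarrow> ('a \<Rightarrow> 'a) set" and b :: "real fps"
  assumes A_permutes: "\<And>S p. p \<in> A S \<Longrightarrow> p permutes S"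
    and Blk_permutes: "\<And>B p. p \<in> Blk B \<Longrightarrow> p permutes B"
    and split: "\<And>S p a. finite S \<Longrightarrow> p \<in> A S \<Longrightarrow> a \<in> S \<Longrightarrow>
                  \<exists>B\<subseteq>S. a \<in> B \<and> perm_restrict p B \<in> Blk B \<and> perm_restrict p (S - B) \<in> A (S - B)"
    and Blk_card: "\<And>B. finite B \<Longrightarrow> B \<noteq> {} \<Longrightarrow> real (card (Blk B)) \<le> fact (card B) * b $ card B"
    and "b $ 0 = 0"
  shows "finite S \<Longrightarrow> real (card (A S)) \<le> fact (card S) * fps_exp_of b $ card S"
proof (induction "card S" arbitrary: S rule: less_induct)
  case less
  show ?case
  proof (cases "S = {}")
    case True
    have "card (A S) \<le> 1"
      using A_permutes[of _ S] unfolding True by (rule card_permutes_empty_family_le)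
    then show ?thesis using True by simp
  next
    case False
    then obtain a where "a \<in> S" by blast
    define k where "k = card S"
    define BB where "BB = {B. B \<subseteq> S \<and> a \<in> B}"
    have "finite BB" unfolding BB_def using less.prems by simp
    have "card (A S) \<le> (\<Sum>B\<in>BB. card (Blk B) * card (A (S - B)))"
    proof (rule card_le_sum_card_restrictions[OF less.prems A_permutes \<open>finite BB\<close>])
      show "finite (Blk B)" if "B \<in> BB" for B
      proof (rule finite_permutes_family[OF _ Blk_permutes])
        show "finite B" using that less.prems unfolding BB_def by (auto intro: rev_finite_subset)
      qed
      show "finite (A (S - B))" for B
        using less.prems A_permutes by (intro finite_permutes_family[of "S - B"]) auto
      show "\<exists>B\<in>BB. perm_restrict p B \<in> Blk B \<and> perm_restrict p (S - B) \<in> A (S - B)"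
        if "p \<in> A S" for p
        using split[OF less.prems that \<open>a \<in> S\<close>] unfolding BB_def by blast
    qed
    then have "real (card (A S)) \<le> (\<Sum>B\<in>BB. real (card (Blk B)) * real (card (A (S - B))))"
      by (simp flip: of_nat_mult of_nat_sum)
    also have "\<dots> \<le> (\<Sum>B\<in>BB. fact (card B) * b $ card B * (fact (k - card B) * fps_exp_of b $ (k - card B)))"
    proof (intro sum_mono mult_mono)
      fix B assume "B \<in> BB"
      then have "B \<subseteq> S" "a \<in> B" unfolding BB_def by auto
      have "finite B" using \<open>B \<subseteq> S\<close> less.prems by (rule finite_subset)
      then show "real (card (Blk B)) \<le> fact (card B) * b $ card B"
        using Blk_card \<open>a \<in> B\<close> by blast
      then show "0 \<le> fact (card B) * b $ card B" by (rule order_trans[rotated]) simp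
      have "card (S - B) = k - card B" using \<open>B \<subseteq> S\<close> \<open>finite B\<close> by (simp add: k_def card_Diff_subset)
      moreover have "card (S - B) < card S"
        using \<open>B \<subseteq> S\<close> \<open>a \<in> B\<close> less.prems by (intro psubset_card_mono) auto
      ultimately show "real (card (A (S - B))) \<le> fact (k - card B) * fps_exp_of b $ (k - card B)"
        using less.hyps[of "S - B"] less.prems by simp
    qed simp_all
    also have "\<dots> = fact k * fps_exp_of b $ k"
      unfolding BB_def k_def by (rule sum_subsets_containing_exp_coeff[OF less.prems \<open>a \<in> S\<close> \<open>b $ 0 = 0\<close>])
    finally show ?thesis unfolding k_def .
  qed
qed

theorem p_series_le_q1_mult_q2:
  assumes "n > 0"
  shows "p_series n \<preceq>\<^sub>f q1 n * q2 n"
  unfolding fps_le_def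
proof
  fix k
  have "perms_with_root n k \<subseteq> admissible_perms n {..<k}"
    using funpow_in_admissible_perms[OF assms] by (auto simp: perms_with_root_def)
  moreover have "finite (admissible_perms n {..<k})"
    by (rule finite_permutes_family[of "{..<k}"]) (auto simp: admissible_perms_def)
  ultimately have "card (perms_with_root n k) \<le> card (admissible_perms n {..<k})" by (rule card_mono[rotated])
  also have "real (card (admissible_perms n {..<k}))
      \<le> fact (card {..<k}) * fps_exp_of (q1_log n + q2_log n) $ card {..<k}"
  proof (rule card_le_fact_mult_exp_coeff)
    show "p permutes S" if "p \<in> admissible_perms n S" for S p
      using that by (simp add: admissible_perms_def)
    show "p permutes B" if "p \<in> dn_blocks n B" for B p
      using that by (auto simp: dn_blocks_def uniform_cycle_perms_def)
  qed (use admissible_perms_split[OF assms] card_dn_blocks_le[OF assms] in simp_all)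
  also have "\<dots> = fact k * (q1 n * q2 n) $ k" by (simp add: q1_mult_q2)
  finally show "p_series n $ k \<le> (q1 n * q2 n) $ k"
    by (simp add: p_series_def field_simps)
qed

section \<open>Decay of the coefficients of q2\<close>

lemma q2_log_nth_nonneg: "q2_log n $ m \<ge> 0"
  by (simp add: q2_log_def sum_nonneg)

lemma q2_log_nth_le:
  assumes "n > 0" "m \<ge> 1"
  shows "q2_log n $ m \<le> real n ^ 3 / (real m)^2"
proof -
  define R where "R = {r. 1 \<le> r \<and> r \<le> m \<and> gcd r n > 1 \<and> r * dn n r = m}"
  have "R \<subseteq> (\<lambda>d. m div d) ` {1..n}"
  proof
    fix r assume "r \<in> R"
    then have "r = m div dn n r" using dn_pos[OF assms(1), of r] by (auto simp: R_def)
    moreover have "dn n r \<in> {1..n}"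
      using dn_pos[OF assms(1), of r] dn_dvd[OF assms(1), of r] assms(1) by (auto simp: dvd_imp_le)
    ultimately show "r \<in> (\<lambda>d. m div d) ` {1..n}" by blast
  qed
  then have "card R \<le> card ((\<lambda>d. m div d) ` {1..n})" by (intro card_mono) auto
  also have "\<dots> \<le> n" using card_image_le[of "{1..n}" "\<lambda>d. m div d"] by simp
  finally have "card R \<le> n" .
  have term_le: "1 / (real r)^2 \<le> (real n)^2 / (real m)^2" if "r \<in> R" for r
  proof -
    have "r \<ge> 1" "m \<le> r * n"
      using that dn_dvd[OF assms(1), of r] assms(1) by (auto simp: R_def dvd_imp_le)
    have "1 / (real r)^2 = (real n)^2 / (real r * real n)^2"
      using \<open>r \<ge> 1\<close> assms(1) by (simp add: power_mult_distrib)
    also have "\<dots> \<le> (real n)^2 / (real m)^2"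
      using \<open>m \<le> r * n\<close> \<open>r \<ge> 1\<close> assms
      by (intro divide_left_mono power_mono mult_pos_pos) (simp_all flip: of_nat_mult)
    finally show ?thesis .
  qed
  have "q2_log n $ m = (\<Sum>r\<in>R. 1 / (real r)^2)" by (simp add: q2_log_def R_def)
  also have "\<dots> \<le> real (card R) * ((real n)^2 / (real m)^2)" by (rule sum_bounded_above[OF term_le])
  also have "\<dots> \<le> real n * ((real n)^2 / (real m)^2)"
    using \<open>card R \<le> n\<close> by (intro mult_right_mono) auto
  also have "\<dots> = real n ^ 3 / (real m)^2" by (simp add: power3_eq_cube power2_eq_square)
  finally show ?thesis .
qed

theorem q2_nth_bigo:
  assumes "n > 0"
  shows "(\<lambda>m. q2 n $ m) \<in> O(\<lambda>m. 1 / (real m)^2)"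
  unfolding q2_eq_exp_of
  by (rule fps_exp_of_nth_bigo_inverse_square[OF q2_log_nth_nonneg q2_log_nth_0 q2_log_nth_le[OF assms]])

section \<open>The product formula for q1\<close>

lemma sum_Pow_minus_one_power_card:
  assumes "finite A"
  shows "(\<Sum>X\<in>Pow A. (-1::int) ^ card X) = (if A = {} then 1 else 0)"
proof -
  from prod_diff_conv_sum[OF assms, of "\<lambda>_. 1" "\<lambda>_. 1"]
  have "0 ^ card A = (\<Sum>X\<in>Pow A. (-1::int) ^ card X)" by simp
  then show ?thesis using assms by (simp add: power_0_left)
qed

lemma prod_prime_factors_squarefree:
  assumes "squarefree (d :: nat)"
  shows "\<Prod>(prime_factors d) = d"
proof -
  have "d \<noteq> 0" using assms by (metis not_squarefree_0)
  then have "d = (\<Prod>p\<in>prime_factors d. p ^ multiplicity p d)" by (simp add: prod_prime_factors)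
  also have "\<dots> = \<Prod>(prime_factors d)"
    using squarefree_factorial_semiring'[OF \<open>d \<noteq> 0\<close>] assms by (intro prod.cong) auto
  finally show ?thesis by simp
qed

lemma
  fixes T :: "nat set"
  assumes "finite T" "\<And>p. p \<in> T \<Longrightarrow> prime p"
  shows prime_factors_prod_primes: "prime_factors (\<Prod>T) = T"
    and squarefree_prod_primes: "squarefree (\<Prod>T)"
proof -
  have mult: "multiplicity p (\<Prod>T) = (if p \<in> T then 1 else 0)" if "prime p" for p
    using multiplicity_prod_prime_powers[OF assms that, of "\<lambda>_. 1"] by simp
  have "0 \<notin> T" using assms(2) by (metis not_prime_0)
  then have "\<Prod>T \<noteq> 0" using assms(1) by simp
  then show "prime_factors (\<Prod>T) = T" "squarefree (\<Prod>T)"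
    using mult assms(2) by (auto simp: prime_factors_multiplicity squarefree_factorial_semiring''
      split: if_splits)
qed

lemma prod_prime_factors_dvd:
  assumes "k > (0 :: nat)"
  shows "\<Prod>(prime_factors k) dvd k"
proof -
  have "\<Prod>(prime_factors k) dvd (\<Prod>p\<in>prime_factors k. p ^ multiplicity p k)"
    by (intro prod_dvd_prod dvd_power) (auto simp: prime_factors_multiplicity)
  also have "\<dots> = k" using assms by (simp add: prod_prime_factors)
  finally show ?thesis .
qed

lemma bij_betw_squarefree_divisors_Pow_prime_factors:
  assumes "k > (0 :: nat)"
  shows "bij_betw prime_factors {d. d dvd k \<and> squarefree d} (Pow (prime_factors k))"
proof (rule bij_betw_byWitness[where f' = Prod])
  show "\<forall>d\<in>{d. d dvd k \<and> squarefree d}. \<Prod>(prime_factors d) = d"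
    by (simp add: prod_prime_factors_squarefree)
  show "\<forall>T\<in>Pow (prime_factors k). prime_factors (\<Prod>T) = T"
  proof
    fix T assume "T \<in> Pow (prime_factors k)"
    then have "T \<subseteq> prime_factors k" by simp
    then have "finite T" by (rule finite_subset) simp
    then show "prime_factors (\<Prod>T) = T"
      using \<open>T \<subseteq> prime_factors k\<close> by (intro prime_factors_prod_primes) auto
  qed
  show "prime_factors ` {d. d dvd k \<and> squarefree d} \<subseteq> Pow (prime_factors k)"
    using assms by (auto intro: dvd_trans simp: in_prime_factors_iff)
  show "Prod ` Pow (prime_factors k) \<subseteq> {d. d dvd k \<and> squarefree d}"
  proof
    fix d assume "d \<in> Prod ` Pow (prime_factors k)"
    then obtain T where T: "T \<subseteq> prime_factors k" "d = \<Prod>T" by blast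
    then have "finite T" by (meson finite_set_mset finite_subset)
    have "\<And>p. p \<in> T \<Longrightarrow> prime p" using T(1) by auto
    have "\<Prod>T dvd \<Prod>(prime_factors k)" using T(1) by (intro prod_dvd_prod_subset) auto
    then have "d dvd k" using T(2) prod_prime_factors_dvd[OF assms] by (blast intro: dvd_trans)
    then show "d \<in> {d. d dvd k \<and> squarefree d}"
      using squarefree_prod_primes[OF \<open>finite T\<close>] \<open>\<And>p. p \<in> T \<Longrightarrow> prime p\<close> T(2) by auto
  qed
qed

lemma sum_moebius_mu_divisors:
  assumes "k > 0"
  shows "(\<Sum>d | d dvd k. moebius_mu d) = (if k = 1 then 1 else 0)"
proof -
  have "(\<Sum>d | d dvd k. moebius_mu d) = (\<Sum>d | d dvd k \<and> squarefree d. (-1) ^ card (prime_factors d))"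
    using assms by (intro sum.mono_neutral_cong_right) (auto simp: moebius_mu_def)
  also have "\<dots> = (\<Sum>T\<in>Pow (prime_factors k). (-1) ^ card T)"
    by (rule sum.reindex_bij_betw[OF bij_betw_squarefree_divisors_Pow_prime_factors[OF assms]])
  also have "\<dots> = (if k = 1 then 1 else 0)"
    using assms by (simp add: sum_Pow_minus_one_power_card prime_factorization_empty_iff)
  finally show ?thesis .
qed

definition dvd_indicator_fps :: "nat \<Rightarrow> real fps" where
  "dvd_indicator_fps d = Abs_fps (\<lambda>j. if d dvd Suc j then 1 else 0)"

lemma one_minus_Xpow_mult_dvd_indicator_fps:
  assumes "d > 0"
  shows "(1 - fps_X ^ d) * dvd_indicator_fps d = fps_X ^ (d - 1)"
proof (rule fps_ext)
  fix j
  have "((1 - fps_X ^ d) * dvd_indicator_fps d) $ j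
      = dvd_indicator_fps d $ j - (if d \<le> j then dvd_indicator_fps d $ (j - d) else 0)"
    by (simp add: algebra_simps fps_X_power_mult_nth fps_X_power_mult_right_nth)
  also have "\<dots> = (fps_X ^ (d - 1) :: real fps) $ j"
  proof (cases "d \<le> j")
    case True
    then have "d dvd Suc j \<longleftrightarrow> d dvd Suc (j - d)" using dvd_add_left_iff[of d d "Suc (j - d)"] by simp
    then show ?thesis using True assms by (simp add: dvd_indicator_fps_def)
  next
    case False
    then have "d dvd Suc j \<longleftrightarrow> j = d - 1" using assms by (auto dest: dvd_imp_le)
    then show ?thesis using False by (simp add: dvd_indicator_fps_def)
  qed
  finally show "((1 - fps_X ^ d) * dvd_indicator_fps d) $ j = (fps_X ^ (d - 1) :: real fps) $ j" .
qed

lemma one_plus_X_mult_fps_deriv_binomial: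
  "(1 + fps_X) * fps_deriv (fps_binomial a) = fps_const (a :: real) * fps_binomial a"
proof -
  have u: "(1 + fps_X :: real fps) $ 0 \<noteq> 0" by simp
  have "(1 + fps_X) * fps_deriv (fps_binomial a)
      = fps_const a * fps_binomial a * (inverse (1 + fps_X) * (1 + fps_X))"
    unfolding fps_binomial_deriv fps_divide_unit[OF u] by (simp add: ac_simps)
  then show ?thesis using inverse_mult_eq_1[OF u] by simp
qed

lemma fps_deriv_one_minus_Xpow_powr:
  assumes "d > 0"
  shows "fps_deriv (fps_one_minus_Xpow_powr d a)
           = fps_const (- a * real d) * dvd_indicator_fps d * fps_one_minus_Xpow_powr d a"
proof -
  define B :: "real fps" where "B = - (fps_X ^ d)"
  define P where "P = fps_one_minus_Xpow_powr d a"
  have "B $ 0 = 0" using assms by (simp add: B_def)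
  have dB: "fps_deriv B = - (fps_const (real d) * fps_X ^ (d - 1))"
    using assms by (auto simp: B_def fps_eq_iff)
  have "(1 + B) * (fps_deriv (fps_binomial a) oo B) = fps_const a * P"
    using arg_cong[OF one_plus_X_mult_fps_deriv_binomial, of "\<lambda>F. F oo B"] \<open>B $ 0 = 0\<close>
    by (simp add: P_def B_def fps_one_minus_Xpow_powr_def fps_compose_mult_distrib fps_compose_add_distrib)
  then have "(1 - fps_X ^ d) * fps_deriv P = fps_const a * P * fps_deriv B"
    by (simp add: P_def fps_one_minus_Xpow_powr_def B_def[symmetric] fps_compose_deriv[OF \<open>B $ 0 = 0\<close>]
        mult.assoc[symmetric]) (simp add: B_def)
  also have "\<dots> = fps_const (- a * real d) * fps_X ^ (d - 1) * P"
  proof -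
    have "fps_const (- a * real d) = - (fps_const a * fps_const (real d))" by simp
    then show ?thesis unfolding dB
      by (simp only: mult_minus_left mult_minus_right mult.assoc mult.commute mult.left_commute)
  qed
  also have "\<dots> = (1 - fps_X ^ d) * (fps_const (- a * real d) * dvd_indicator_fps d * P)"
    unfolding one_minus_Xpow_mult_dvd_indicator_fps[OF assms, symmetric] by (simp only: ac_simps)
  finally have "(1 - fps_X ^ d) * fps_deriv P
      = (1 - fps_X ^ d) * (fps_const (- a * real d) * dvd_indicator_fps d * P)" .
  moreover have "(1 - fps_X ^ d :: real fps) $ 0 \<noteq> 0" using assms by simp
  then have "(1 - fps_X ^ d :: real fps) \<noteq> 0" by (metis fps_zero_nth)
  ultimately show ?thesis unfolding P_def by simp
qed

lemma fps_one_minus_Xpow_powr_nth_0 [simp]: "fps_one_minus_Xpow_powr d a $ 0 = 1"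
  by (simp add: fps_one_minus_Xpow_powr_def)

lemma fps_prod_nth_0: "(\<Prod>x\<in>A. f x) $ 0 = (\<Prod>x\<in>A. f x $ 0)"
  by (induction A rule: infinite_finite_induct) auto

lemma fps_deriv_prod_eq:
  fixes P h :: "'b \<Rightarrow> real fps"
  assumes "finite D" "\<And>d. d \<in> D \<Longrightarrow> fps_deriv (P d) = h d * P d"
  shows "fps_deriv (prod P D) = sum h D * prod P D"
  using assms
proof (induction D rule: finite_induct)
  case (insert x F)
  then show ?case by (simp add: algebra_simps)
qed simp

lemma fps_deriv_q1_log:
  assumes "n > 0"
  shows "fps_deriv (q1_log n)
           = (\<Sum>d | d dvd n. fps_const (real_of_int (moebius_mu d)) * dvd_indicator_fps d)"
proof (rule fps_ext)
  fix j
  have "(\<Sum>d | d dvd n. fps_const (real_of_int (moebius_mu d)) * dvd_indicator_fps d) $ j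
      = (\<Sum>d | d dvd n. if d dvd Suc j then real_of_int (moebius_mu d) else 0)"
    by (auto simp: fps_sum_nth dvd_indicator_fps_def intro!: sum.cong)
  also have "\<dots> = (\<Sum>d | d dvd gcd (Suc j) n. real_of_int (moebius_mu d))"
    using assms by (simp add: sum.inter_filter[symmetric] conj_commute)
  also have "\<dots> = (if coprime (Suc j) n then 1 else 0)"
    using sum_moebius_mu_divisors[of "gcd (Suc j) n"] by (simp add: coprime_iff_gcd_eq_1 flip: of_int_sum)
  also have "\<dots> = fps_deriv (q1_log n) $ j"
    by (simp add: q1_log_def del: of_nat_Suc)
  finally show "fps_deriv (q1_log n) $ j
      = (\<Sum>d | d dvd n. fps_const (real_of_int (moebius_mu d)) * dvd_indicator_fps d) $ j" ..
qed

theorem q1_eq_prod_one_minus_Xpow_powr: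
  assumes "n > 0"
  shows "q1 n = (\<Prod>d\<in>{d. d dvd n}. fps_one_minus_Xpow_powr d (- real_of_int (moebius_mu d) / real d))"
proof (rule fps_deriv_eq_mult_imp_eq)
  let ?h = "\<lambda>d. fps_const (real_of_int (moebius_mu d)) * dvd_indicator_fps d"
  show "fps_deriv (q1 n) = (\<Sum>d | d dvd n. ?h d) * q1 n"
    using fps_deriv_q1_log[OF assms] by (simp add: q1_eq_exp_of fps_deriv_exp_of)
  show "fps_deriv (\<Prod>d\<in>{d. d dvd n}. fps_one_minus_Xpow_powr d (- real_of_int (moebius_mu d) / real d))
      = (\<Sum>d | d dvd n. ?h d) * (\<Prod>d\<in>{d. d dvd n}. fps_one_minus_Xpow_powr d (- real_of_int (moebius_mu d) / real d))"
    using assms by (intro fps_deriv_prod_eq) (auto simp: fps_deriv_one_minus_Xpow_powr intro: Nat.gr0I)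
qed (simp add: q1_eq_exp_of fps_prod_nth_0)

theorem mainTheorem6:
  fixes n :: nat
  assumes "n \<ge> 2"
  shows "p_series n \<preceq>\<^sub>f q1 n * q2 n
    \<and> (\<lambda>m. fps_nth (q2 n) m) \<in> O(\<lambda>m. 1 / (real m)^2)
    \<and> q1 n = (\<Prod>d\<in>{d. d dvd n}. fps_one_minus_Xpow_powr d (- real_of_int (moebius_mu d) / real d))"
  using p_series_le_q1_mult_q2 q2_nth_bigo q1_eq_prod_one_minus_Xpow_powr assms by simp

end
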